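(* Let $n\ge2$. The number of exceptional sets in the abelian tube $\mathcal W_n$ of rank $n$ is \[\frac{n\,(3n-3)!}{(n-1)!\,(2n-1)!}.\]
   Context: $\mathcal W_n$ is the category of finite-dimensional nilpotent representations of an oriented cycle with $n$ vertices. An exceptional sequence in $\mathcal W_n$ is a sequence $(V_1,\dots,V_k)$ of rigid bricks (indecomposables of length at most $n-1$) with $\mathrm{Hom}(V_j,V_i)=0=\mathrm{Ext}^1(V_j,V_i)$ for $i<j$; it is complete if $k=n-1$. An exceptional set is a set of (isomorphism classes of) objects which can be ordered to form a complete exceptional sequence. *)

theory Defs
  imports Complex_Main
begin

text \<open>
  Concrete model of the abelian tube W_n: nilpotent representations of the
  oriented cycle with vertices 0..n-1 and arrows v -> (v+1) mod n, over a field 'k.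
  Up to isomorphism the indecomposables are the uniserial representations
  U(i,l) (i < n, l >= 1): basis vectors e_0..e_{l-1}, e_k sitting at vertex
  (i+k) mod n, arrows acting by e_k -> e_{k+1} (e_{l-1} -> 0).
  A representation is encoded by the pair (i,l); distinct pairs give
  non-isomorphic representations.  Linear maps are matrices nat => nat => 'k
  (rows indexed by the target basis, columns by the source basis).
\<close>

type_synonym obj = "nat \<times> nat"

definition vtx :: "nat \<Rightarrow> nat \<Rightarrow> nat \<Rightarrow> nat" where
  "vtx n i k = (i + k) mod n"

definition indec :: "nat \<Rightarrow> obj set" where
  "indec n = {(i, l). i < n \<and> 1 \<le> l}"

definition mmul :: "nat \<Rightarrow> (nat \<Rightarrow> nat \<Rightarrow> 'k::field) \<Rightarrow> (nat \<Rightarrow> nat \<Rightarrow> 'k) \<Rightarrow> nat \<Rightarrow> nat \<Rightarrow> 'k" where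
  "mmul p A B = (\<lambda>j k. \<Sum>m<p. A j m * B m k)"

text \<open>matrix of the nilpotent arrow action on U(i,l)\<close>
definition shift :: "'k itself \<Rightarrow> nat \<Rightarrow> nat \<Rightarrow> nat \<Rightarrow> 'k::field" where
  "shift K l = (\<lambda>j k. if j = Suc k \<and> j < l then 1 else 0)"

definition idm :: "'k itself \<Rightarrow> nat \<Rightarrow> nat \<Rightarrow> nat \<Rightarrow> 'k::field" where
  "idm K l = (\<lambda>j k. if j = k \<and> j < l then 1 else 0)"

text \<open>degree-0 maps U -> U' : families of linear maps U_v -> U'_v\<close>
definition graded0 :: "nat \<Rightarrow> obj \<Rightarrow> obj \<Rightarrow> (nat \<Rightarrow> nat \<Rightarrow> 'k::field) \<Rightarrow> bool" where
  "graded0 n U U' f = (\<forall>j k. (k < snd U \<and> j < snd U' \<and> vtx n (fst U') j = vtx n (fst U) k) \<or> f j k = 0)"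

text \<open>degree-1 maps: families of linear maps U_v -> U'_{v+1}, one for each arrow v -> v+1\<close>
definition graded1 :: "nat \<Rightarrow> obj \<Rightarrow> obj \<Rightarrow> (nat \<Rightarrow> nat \<Rightarrow> 'k::field) \<Rightarrow> bool" where
  "graded1 n U U' g = (\<forall>j k. (k < snd U \<and> j < snd U' \<and> vtx n (fst U') j = Suc (vtx n (fst U) k) mod n) \<or> g j k = 0)"

definition is_hom :: "'k itself \<Rightarrow> nat \<Rightarrow> obj \<Rightarrow> obj \<Rightarrow> (nat \<Rightarrow> nat \<Rightarrow> 'k::field) \<Rightarrow> bool" where
  "is_hom K n U U' f \<longleftrightarrow> graded0 n U U' f \<and>
     mmul (snd U') (shift K (snd U')) f = mmul (snd U) f (shift K (snd U))"

definition hom_zero :: "'k::field itself \<Rightarrow> nat \<Rightarrow> obj \<Rightarrow> obj \<Rightarrow> bool" where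
  "hom_zero K n U U' \<longleftrightarrow> (\<forall>f :: nat \<Rightarrow> nat \<Rightarrow> 'k. is_hom K n U U' f \<longrightarrow> f = (\<lambda>_ _. 0))"

text \<open>Ext^1(U,U') = 0: via the standard (Ringel) resolution for quiver representations,
  Ext^1(U,U') is the cokernel of (f_v)_v |-> (U'_a f_{s a} - f_{t a} U_a)_a.\<close>
definition ext_zero :: "'k::field itself \<Rightarrow> nat \<Rightarrow> obj \<Rightarrow> obj \<Rightarrow> bool" where
  "ext_zero K n U U' \<longleftrightarrow> (\<forall>g :: nat \<Rightarrow> nat \<Rightarrow> 'k. graded1 n U U' g \<longrightarrow>
     (\<exists>f. graded0 n U U' f \<and>
        g = (\<lambda>j k. mmul (snd U') (shift K (snd U')) f j k - mmul (snd U) f (shift K (snd U)) j k)))"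

definition brick :: "'k::field itself \<Rightarrow> nat \<Rightarrow> obj \<Rightarrow> bool" where
  "brick K n U \<longleftrightarrow> (\<forall>f :: nat \<Rightarrow> nat \<Rightarrow> 'k. is_hom K n U U f \<longrightarrow> f \<noteq> (\<lambda>_ _. 0) \<longrightarrow>
     (\<exists>g. mmul (snd U) f g = idm K (snd U) \<and> mmul (snd U) g f = idm K (snd U)))"

definition rigid_brick :: "'k::field itself \<Rightarrow> nat \<Rightarrow> obj \<Rightarrow> bool" where
  "rigid_brick K n U \<longleftrightarrow> brick K n U \<and> ext_zero K n U U"

definition exc_seq :: "'k::field itself \<Rightarrow> nat \<Rightarrow> obj list \<Rightarrow> bool" where
  "exc_seq K n xs \<longleftrightarrow>
     (\<forall>V\<in>set xs. V \<in> indec n \<and> rigid_brick K n V) \<and>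
     (\<forall>i j. i < j \<and> j < length xs \<longrightarrow>
        hom_zero K n (xs ! j) (xs ! i) \<and> ext_zero K n (xs ! j) (xs ! i))"

definition exc_set :: "'k::field itself \<Rightarrow> nat \<Rightarrow> obj set \<Rightarrow> bool" where
  "exc_set K n S \<longleftrightarrow> (\<exists>xs. exc_seq K n xs \<and> length xs = n - 1 \<and> set xs = S)"

end

theory Submission
  imports Defs
begin

text \<open>
  Over any field, Hom and Ext^1 between the uniserial representations U(i, l) are governed by
  explicit combinatorial conditions (has_hom, has_ext), and the rigid bricks are the
  U(i, l) with l < n. So an exceptional set is a set of n - 1 arcs of length < n on the n-cycle
  admitting a ranking that strictly increases along nonzero Hom and Ext^1.

  Such a set leaves some vertex g of the cycle uncovered: otherwise, in the universal cover, a
  chain of Ext-related arcs would run between two copies of a longest arc, which have the same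
  rank. Cutting the cycle after g identifies the sets missing g with the exceptional sets of
  segments on a line with n - 1 vertices (type A_(n-1)), and g is unique since those cover
  every vertex. Splitting off the longest segment at the left end, and then the vertex left
  uncovered below it, gives the ternary-tree recursion
  c(m + 1) = \<Sum> c(i) c(j - i) c(m - j), solved by the Fuss-Catalan numbers (3m)! / (m! (2m + 1)!).
\<close>

lemma mod_add_right_cancel_nat: "((x::nat) + c) mod n = (y + c) mod n \<longleftrightarrow> x mod n = y mod n"
  by (simp add: nat_mod_eq_iff)

definition ranking :: "('a \<Rightarrow> 'a \<Rightarrow> bool) \<Rightarrow> 'a set \<Rightarrow> ('a \<Rightarrow> nat) \<Rightarrow> bool" where
  "ranking R S f \<longleftrightarrow> (\<forall>X\<in>S. \<forall>Y\<in>S. X \<noteq> Y \<longrightarrow> R X Y \<longrightarrow> f X < f Y)"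

lemma rankingD: "ranking R S f \<Longrightarrow> X \<in> S \<Longrightarrow> Y \<in> S \<Longrightarrow> X \<noteq> Y \<Longrightarrow> R X Y \<Longrightarrow> f X < f Y"
  unfolding ranking_def by blast

lemma ranking_subset: "ranking R S f \<Longrightarrow> T \<subseteq> S \<Longrightarrow> ranking R T f"
  unfolding ranking_def by blast

lemma ranking_pullback:
  assumes "ranking R S f" and "h ` A \<subseteq> S"
    and "\<And>Y Y'. Y \<in> A \<Longrightarrow> Y' \<in> A \<Longrightarrow> Y \<noteq> Y' \<Longrightarrow> R' Y Y' \<Longrightarrow> h Y \<noteq> h Y' \<and> R (h Y) (h Y')"
  shows "ranking R' A (f \<circ> h)"
  unfolding ranking_def
proof (intro ballI impI)
  fix Y Y' assume "Y \<in> A" "Y' \<in> A" "Y \<noteq> Y'" "R' Y Y'"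
  then show "(f \<circ> h) Y < (f \<circ> h) Y'"
    using assms unfolding ranking_def by (simp add: image_subset_iff)
qed

lemma ranking_Un:
  assumes "ranking R A f" "ranking R B g" "finite A" "\<forall>X\<in>A. \<forall>Y\<in>B. \<not> R Y X"
  shows "\<exists>h. ranking R (A \<union> B) h"
proof
  define M where "M = Suc (sum f A)"
  have "f X < M + k" if "X \<in> A" for X k
    using member_le_sum[OF that _ \<open>finite A\<close>, of f] unfolding M_def by simp
  then show "ranking R (A \<union> B) (\<lambda>X. if X \<in> A then f X else M + g X)"
    using assms(1,2,4) unfolding ranking_def by auto
qed

lemma exists_list_if_ranking:
  assumes "finite S" "ranking R S f"
  shows "\<exists>xs. distinct xs \<and> set xs = S \<and> (\<forall>i j. i < j \<and> j < length xs \<longrightarrow> \<not> R (xs ! j) (xs ! i))"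
  using assms
proof (induction "card S" arbitrary: S)
  case 0
  then show ?case by (intro exI[of _ "[]"]) simp
next
  case (Suc c)
  then have "S \<noteq> {}" by auto
  \<comment> \<open>an element of maximal rank can go last\<close>
  have "Max (f ` S) \<in> f ` S" using \<open>finite S\<close> \<open>S \<noteq> {}\<close> by simp
  then obtain Y where Y: "Y \<in> S" "f Y = Max (f ` S)" by auto
  have Y_last: "\<not> R Y X" if "X \<in> S - {Y}" for X
  proof
    assume "R Y X"
    then have "f Y < f X" using rankingD[OF Suc.prems(2) Y(1), of X] that by auto
    moreover have "f X \<le> f Y" using Y(2) that \<open>finite S\<close> by simp
    ultimately show False by simp
  qed
  have "c = card (S - {Y})" using Suc.hyps(2) Y(1) \<open>finite S\<close> by simp
  then obtain xs where xs: "distinct xs" "set xs = S - {Y}"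
      "\<forall>i j. i < j \<and> j < length xs \<longrightarrow> \<not> R (xs ! j) (xs ! i)"
    using Suc.hyps(1) \<open>finite S\<close> ranking_subset[OF Suc.prems(2), of "S - {Y}"] by blast
  have "\<not> R ((xs @ [Y]) ! j) ((xs @ [Y]) ! i)" if "i < j" "j < length (xs @ [Y])" for i j
    using xs(3) Y_last[of "xs ! i"] nth_mem[of i xs] that xs(2)
    by (cases "j < length xs") (auto simp: nth_append)
  then show ?case using xs Y(1) by (intro exI[of _ "xs @ [Y]"]) auto
qed

lemma ranking_if_list:
  assumes "distinct xs" "\<forall>i j. i < j \<and> j < length xs \<longrightarrow> \<not> R (xs ! j) (xs ! i)"
  shows "\<exists>f. ranking R (set xs) f"
proof
  define f where "f = inv_into {..<length xs} ((!) xs)"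
  have f_nth: "f (xs ! i) = i" if "i < length xs" for i
    unfolding f_def using that inv_into_f_f[OF inj_on_nth[OF assms(1)], of "{..<length xs}" i]
    by auto
  show "ranking R (set xs) f"
    unfolding ranking_def
  proof (intro ballI impI)
    fix X Y assume "X \<in> set xs" "Y \<in> set xs" "X \<noteq> Y" "R X Y"
    then obtain i j where "i < length xs" "j < length xs" "X = xs ! i" "Y = xs ! j"
      by (auto simp: in_set_conv_nth)
    then show "f X < f Y"
      using assms(2) \<open>X \<noteq> Y\<close> \<open>R X Y\<close> f_nth by (metis linorder_neqE_nat)
  qed
qed

section \<open>Hom and Ext between uniserial representations\<close>

text \<open>
  A nonzero map U \<rightarrow> V identifies a factor module of U, of some length m, with a submodule of V;
  the former has top at vertex fst U, the latter starts at vertex fst V + snd V - m.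
\<close>

definition has_hom :: "nat \<Rightarrow> obj \<Rightarrow> obj \<Rightarrow> bool" where
  "has_hom n U V \<longleftrightarrow>
     (\<exists>m. 1 \<le> m \<and> m \<le> snd U \<and> m \<le> snd V \<and> (fst V + snd V - m) mod n = fst U mod n)"

text \<open>
  For U = (i, l) this is has_hom n V (i + 1, l) with m replaced by l + 1 - m, i.e. the
  Auslander-Reiten formula Ext^1(U, V) = D Hom(V, \<tau>U) of the tube; below it is derived directly
  from ext_zero.
\<close>

definition has_ext :: "nat \<Rightarrow> obj \<Rightarrow> obj \<Rightarrow> bool" where
  "has_ext n U V \<longleftrightarrow>
     (\<exists>m. 1 \<le> m \<and> m \<le> snd U \<and> snd U < snd V + m \<and> (fst U + m) mod n = fst V mod n)"

lemma mmul_shift_left: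
  "mmul l' (shift K l') f j k = (if 1 \<le> j \<and> j < l' then f (j - 1) k else 0)"
proof -
  have "mmul l' (shift K l') f j k =
      (\<Sum>m<l'. if m = j - 1 then (if 1 \<le> j \<and> j < l' then f m k else 0) else 0)"
    unfolding mmul_def shift_def by (rule sum.cong) auto
  also have "\<dots> = (if 1 \<le> j \<and> j < l' then f (j - 1) k else 0)"
    by (subst sum.delta) auto
  finally show ?thesis .
qed

lemma mmul_shift_right:
  "mmul l f (shift K l) j k = (if Suc k < l then f j (Suc k) else 0)"
proof -
  have "mmul l f (shift K l) j k =
      (\<Sum>m<l. if m = Suc k then (if Suc k < l then f j m else 0) else 0)"
    unfolding mmul_def shift_def by (rule sum.cong) auto
  also have "\<dots> = (if Suc k < l then f j (Suc k) else 0)"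
    by (subst sum.delta) auto
  finally show ?thesis .
qed

lemma is_hom_iff:
  "is_hom K n U V f \<longleftrightarrow> graded0 n U V f \<and>
     (\<forall>j k. (if 1 \<le> j \<and> j < snd V then f (j - 1) k else 0) =
            (if Suc k < snd U then f j (Suc k) else 0))"
  unfolding is_hom_def mmul_shift_left mmul_shift_right by (auto simp: fun_eq_iff)

lemma graded0_outside:
  "graded0 n U V f \<Longrightarrow> \<not> (k < snd U \<and> j < snd V \<and> (fst V + j) mod n = (fst U + k) mod n) \<Longrightarrow> f j k = 0"
  unfolding graded0_def vtx_def by blast

lemma is_hom_entry:
  "is_hom K n U V f \<Longrightarrow>
     (if 1 \<le> j \<and> j < snd V then f (j - 1) k else 0) = (if Suc k < snd U then f j (Suc k) else 0)"
  unfolding is_hom_iff by blast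

lemma hom_entry_Suc_Suc:
  assumes "is_hom K n U V f"
  shows "f (Suc j) (Suc k) = (if Suc j < snd V \<and> Suc k < snd U then f j k else 0)"
proof -
  have "(if Suc j < snd V then f j k else 0) = (if Suc k < snd U then f (Suc j) (Suc k) else 0)"
    using is_hom_entry[OF assms, of "Suc j" k]
    by (simp only: One_nat_def diff_Suc_Suc diff_zero Suc_le_mono le0 simp_thms)
  moreover have "f (Suc j) (Suc k) = 0" if "\<not> (Suc j < snd V \<and> Suc k < snd U)"
    using assms that unfolding is_hom_iff by (blast intro: graded0_outside)
  ultimately show ?thesis by (auto split: if_splits)
qed

lemma hom_entry_0_Suc:
  assumes "is_hom K n U V f"
  shows "f 0 (Suc k) = 0"
proof (cases "Suc k < snd U")
  case True
  then show ?thesis using is_hom_entry[OF assms, of 0 k] by simp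
next
  case False
  then show ?thesis using assms unfolding is_hom_iff by (blast intro: graded0_outside)
qed

lemma hom_entry_above_diag:
  assumes "is_hom K n U V f" and "j < k"
  shows "f j k = 0"
  using assms(2)
proof (induction j arbitrary: k)
  case 0
  then show ?case using hom_entry_0_Suc[OF assms(1)] by (metis Suc_pred)
next
  case (Suc j)
  then obtain k' where "k = Suc k'" "j < k'" by (cases k) auto
  then show ?case using hom_entry_Suc_Suc[OF assms(1), of j k'] Suc.IH by simp
qed

lemma hom_entry_diag_shift:
  assumes "is_hom K n U V f" and "j + t < snd V" and "t < snd U"
  shows "f (j + t) t = f j 0"
  using assms(2,3) by (induction t) (simp_all add: hom_entry_Suc_Suc[OF assms(1)])

lemma hom_entry_last_col:
  assumes "is_hom K n U V f" and "Suc j < snd V" and "1 \<le> snd U"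
  shows "f j (snd U - 1) = 0"
  using is_hom_entry[OF assms(1), of "Suc j" "snd U - 1"] assms(2,3) by simp

lemma hom_eq_zero_if_not_has_hom:
  assumes hom: "is_hom K n U V f" and "\<not> has_hom n U V"
  shows "f = (\<lambda>_ _. 0)"
proof -
  obtain i l i' l' where U: "U = (i, l)" and V: "V = (i', l')" by (cases U, cases V)
  have gr: "graded0 n U V f" using hom by (simp add: is_hom_iff)
  have first_col: "f j 0 = 0" for j
  proof (cases "0 < l \<and> j < l' \<and> (i' + j) mod n = i mod n")
    case False
    then show ?thesis using graded0_outside[OF gr, of 0 j] U V by auto
  next
    case True
    have "\<not> l' \<le> j + l"
    proof
      assume "l' \<le> j + l"
      then have "has_hom n U V" unfolding has_hom_def U V using True
        by (intro exI[of _ "l' - j"]) auto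
      then show False using assms(2) by simp
    qed
    then have "f (j + (l - 1)) (l - 1) = 0"
      using hom_entry_last_col[OF hom, of "j + (l - 1)"] True U V by simp
    then show ?thesis using hom_entry_diag_shift[OF hom, of j "l - 1"] \<open>\<not> l' \<le> j + l\<close> True U V
      by simp
  qed
  have "f j k = 0" for j k
  proof (cases "k \<le> j \<and> j < l' \<and> k < l")
    case True
    then show ?thesis
      using hom_entry_diag_shift[OF hom, of "j - k" k] first_col U V by simp
  next
    case False
    then show ?thesis
      using hom_entry_above_diag[OF hom, of j k] graded0_outside[OF gr, of k j] U V by fastforce
  qed
  then show ?thesis by (simp add: fun_eq_iff)
qed

lemma has_hom_imp_nonzero_hom:
  assumes "has_hom n U V"
  shows "\<exists>f. is_hom K n U V f \<and> f \<noteq> (\<lambda>_ _. 0::'k::field)"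
proof -
  obtain i l i' l' where U: "U = (i, l)" and V: "V = (i', l')" by (cases U, cases V)
  obtain m where m: "1 \<le> m" "m \<le> l" "m \<le> l'" "(i' + l' - m) mod n = i mod n"
    using assms unfolding has_hom_def U V by auto
  define f :: "nat \<Rightarrow> nat \<Rightarrow> 'k" where "f j k = (if k < m \<and> j = k + (l' - m) then 1 else 0)" for j k
  have "(i' + (k + (l' - m))) mod n = (i + k) mod n" for k
  proof -
    have "i' + (k + (l' - m)) = (i' + l' - m) + k" using m(3) by simp
    then have "(i' + (k + (l' - m))) mod n = ((i' + l' - m) mod n + k) mod n"
      by (metis mod_add_left_eq)
    then show ?thesis using m(4) by (simp add: mod_add_left_eq)
  qed
  then have "graded0 n U V f"
    unfolding graded0_def U V vtx_def f_def using m by auto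
  then have "is_hom K n U V f"
    unfolding is_hom_iff f_def U V using m by auto
  moreover have "f (l' - m) 0 \<noteq> 0" unfolding f_def using m by simp
  ultimately show ?thesis by fastforce
qed

theorem hom_zero_iff_not_has_hom: "hom_zero K n U V \<longleftrightarrow> \<not> has_hom n U V"
  unfolding hom_zero_def using hom_eq_zero_if_not_has_hom has_hom_imp_nonzero_hom by metis

lemma ext_zero_iff_entries:
  "ext_zero K n U V \<longleftrightarrow> (\<forall>g :: nat \<Rightarrow> nat \<Rightarrow> 'k. graded1 n U V g \<longrightarrow>
     (\<exists>f. graded0 n U V f \<and>
        (\<forall>j k. g j k = (if 1 \<le> j \<and> j < snd V then f (j - 1) k else 0)
                      - (if Suc k < snd U then f j (Suc k) else 0))))"
  for K :: "'k::field itself"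
  unfolding ext_zero_def mmul_shift_left mmul_shift_right by (simp add: fun_eq_iff)

lemma graded1_outside:
  "graded1 n U V g \<Longrightarrow> \<not> (k < snd U \<and> j < snd V \<and> (fst V + j) mod n = (fst U + Suc k) mod n)
     \<Longrightarrow> g j k = 0"
  unfolding graded1_def vtx_def by (auto simp: mod_Suc_eq)

text \<open>
  The equations g = shift * f - f * shift link the entries of f along each diagonal. On and below
  the main diagonal f is obtained by summing g towards the last column, above it by summing g
  from the first row.
\<close>

definition diag_solution :: "nat \<Rightarrow> (nat \<Rightarrow> nat \<Rightarrow> 'a::ab_group_add) \<Rightarrow> nat \<Rightarrow> nat \<Rightarrow> 'a" where
  "diag_solution l g j k =
     (if k \<le> j then (\<Sum>t<l - k. g (j + 1 + t) (k + t)) else - (\<Sum>s\<le>j. g (j - s) (k - 1 - s)))"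

lemma diag_solution_below_diag:
  assumes "k < j" "k < l"
  shows "diag_solution l g (j - 1) k - diag_solution l g j (Suc k) = g j k"
proof -
  have "(\<Sum>t<Suc (l - Suc k). g (j + t) (k + t)) = g j k + (\<Sum>t<l - Suc k. g (j + Suc t) (k + Suc t))"
    by (subst sum.lessThan_Suc_shift) simp
  moreover have "Suc (l - Suc k) = l - k" "k \<le> j - 1" "Suc k \<le> j" "j - 1 + 1 = j"
    using assms by auto
  ultimately show ?thesis by (simp add: diag_solution_def)
qed

lemma diag_solution_above_diag:
  assumes "j \<le> k"
  shows "(if 1 \<le> j then diag_solution l g (j - 1) k else 0) - diag_solution l g j (Suc k) = g j k"
proof (cases j)
  case 0
  then show ?thesis by (simp add: diag_solution_def)
next
  case (Suc j')
  have "(\<Sum>s\<le>Suc j'. g (Suc j' - s) (k - s)) =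
      g (Suc j') k + (\<Sum>s\<le>j'. g (Suc j' - Suc s) (k - Suc s))"
    by (subst sum.atMost_Suc_shift) simp
  then show ?thesis using assms Suc by (simp add: diag_solution_def)
qed

lemma has_ext_if_above_diag_last_col:
  assumes "j \<le> k" "k < snd U" "snd U \<le> Suc k" "j < snd V"
    and "(fst V + j) mod n = (fst U + Suc k) mod n"
  shows "has_ext n U V"
proof -
  have "(fst U + (Suc k - j)) mod n = fst V mod n"
    using assms(1,5) mod_add_right_cancel_nat[of "fst U + (Suc k - j)" j n "fst V"]
    by (simp add: add.commute)
  then show ?thesis unfolding has_ext_def using assms(1-4) by (intro exI[of _ "Suc k - j"]) auto
qed

lemma ext_zero_if_not_has_ext:
  fixes K :: "'k::field itself"
  assumes no_ext: "\<not> has_ext n U V"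
  shows "ext_zero K n U V"
  unfolding ext_zero_iff_entries
proof (intro allI impI)
  obtain i l i' l' where U: "U = (i, l)" and V: "V = (i', l')" by (cases U, cases V)
  fix g :: "nat \<Rightarrow> nat \<Rightarrow> 'k"
  assume "graded1 n U V g"
  define supp0 where "supp0 j k \<longleftrightarrow> k < l \<and> j < l' \<and> (i' + j) mod n = (i + k) mod n" for j k
  define supp1 where "supp1 j k \<longleftrightarrow> k < l \<and> j < l' \<and> (i' + j) mod n = (i + Suc k) mod n" for j k
  define f where "f j k = (if supp0 j k then diag_solution l g j k else 0)" for j k
  have "graded0 n U V f" unfolding graded0_def U V vtx_def f_def supp0_def by auto
  moreover have "g j k = (if 1 \<le> j \<and> j < l' then f (j - 1) k else 0)
                          - (if Suc k < l then f j (Suc k) else 0)" for j k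
  proof -
    have supp0_pred: "supp0 (j - 1) k \<longleftrightarrow> supp1 j k" if "1 \<le> j" "j < l'"
      unfolding supp0_def supp1_def
      using that mod_add_right_cancel_nat[of "i' + (j - 1)" 1 n "i + k"]
      by auto
    have supp0_Suc: "supp0 j (Suc k) \<longleftrightarrow> supp1 j k" if "Suc k < l"
      unfolding supp0_def supp1_def using that by auto
    show ?thesis
    proof (cases "supp1 j k")
      case False
      then show ?thesis
        using graded1_outside[OF \<open>graded1 n U V g\<close>, of k j] supp0_pred supp0_Suc
        unfolding f_def supp1_def U V by auto
    next
      case True
      show ?thesis
      proof (cases "k < j")
        case True
        then show ?thesis
          using diag_solution_below_diag[of k j l g] \<open>supp1 j k\<close> supp0_pred supp0_Suc
          unfolding f_def supp1_def by (auto simp: diag_solution_def)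
      next
        case False
        then have "Suc k < l"
          using has_ext_if_above_diag_last_col[of j k U V n] no_ext \<open>supp1 j k\<close>
          unfolding supp1_def U V by fastforce
        then show ?thesis
          using diag_solution_above_diag[of j k l g] \<open>supp1 j k\<close> False supp0_pred supp0_Suc
          unfolding f_def supp1_def by auto
      qed
    qed
  qed
  ultimately show "\<exists>f. graded0 n U V f \<and>
      (\<forall>j k. g j k = (if 1 \<le> j \<and> j < snd V then f (j - 1) k else 0)
                    - (if Suc k < snd U then f j (Suc k) else 0))"
    using U V by auto
qed

lemma not_ext_zero_if_has_ext:
  fixes K :: "'k::field itself"
  assumes "has_ext n U V" and "1 \<le> snd V"
  shows "\<not> ext_zero K n U V"
proof
  obtain i l i' l' where U: "U = (i, l)" and V: "V = (i', l')" by (cases U, cases V)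
  obtain m where m: "1 \<le> m" "m \<le> l" "l < l' + m" "(i + m) mod n = i' mod n"
    using assms(1) unfolding has_ext_def U V by auto
  define g :: "nat \<Rightarrow> nat \<Rightarrow> 'k" where "g j k = (if j = 0 \<and> k = m - 1 then 1 else 0)" for j k
  have "(i' + 0) mod n = Suc ((i + (m - 1)) mod n) mod n" using m(1,4) by (simp add: mod_Suc_eq)
  then have "graded1 n U V g"
    unfolding graded1_def U V vtx_def g_def using m assms(2) V by auto
  moreover assume "ext_zero K n U V"
  ultimately obtain f where gr: "graded0 n U V f" and eq: "\<And>j k. g j k =
      (if 1 \<le> j \<and> j < l' then f (j - 1) k else 0) - (if Suc k < l then f j (Suc k) else 0)"
    unfolding ext_zero_iff_entries U V by auto
  have diag_zero: "f (k - m) k = 0" if "m \<le> k" for k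
    using that
  proof (induction "l - k" arbitrary: k rule: less_induct)
    case less
    show ?case
    proof (cases "k < l")
      case False
      then show ?thesis using graded0_outside[OF gr] U by auto
    next
      case True
      have "g (Suc k - m) k = 0" unfolding g_def using less.prems m(1) by auto
      moreover have "Suc k - m < l'" "1 \<le> Suc k - m" using True m(3) less.prems by linarith+
      ultimately have "f (k - m) k = (if Suc k < l then f (Suc k - m) (Suc k) else 0)"
        using eq[of "Suc k - m" k] less.prems by (simp add: Suc_diff_le)
      then show ?thesis using less.hyps[of "Suc k"] less.prems by simp
    qed
  qed
  have "g 0 (m - 1) = - (if m < l then f 0 m else 0)" using eq[of 0 "m - 1"] m(1) by simp
  then show False using diag_zero[of m] unfolding g_def by (simp split: if_splits)
qed

theorem ext_zero_iff_not_has_ext: "1 \<le> snd V \<Longrightarrow> ext_zero K n U V \<longleftrightarrow> \<not> has_ext n U V"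
  using ext_zero_if_not_has_ext not_ext_zero_if_has_ext by metis

section \<open>Exceptional sets as ranked sets of arcs\<close>

definition rigid_indec :: "nat \<Rightarrow> obj set" where
  "rigid_indec n = {(i, l). i < n \<and> 1 \<le> l \<and> l < n}"

lemma finite_rigid_indec [simp]: "finite (rigid_indec n)"
  by (rule finite_subset[of _ "{..<n} \<times> {..<n}"]) (auto simp: rigid_indec_def)

lemma endo_scalar:
  assumes hom: "is_hom K n U U f" and "snd U < n"
  shows "f j k = (if j = k \<and> j < snd U then f 0 0 else 0)"
proof (cases "k \<le> j \<and> j < snd U")
  case True
  then have diag: "f j k = f (j - k) 0"
    using hom_entry_diag_shift[OF hom, of "j - k" k] by simp
  have "f d 0 = 0" if "0 < d" "d < snd U" for d
  proof -
    have "(fst U + d) mod n \<noteq> (fst U + 0) mod n"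
      using that \<open>snd U < n\<close> mod_add_right_cancel_nat[of d "fst U" n 0] by (simp add: add.commute)
    then show ?thesis using graded0_outside[OF hom[unfolded is_hom_iff, THEN conjunct1]] by blast
  qed
  then show ?thesis using diag True by auto
next
  case False
  then show ?thesis
    using hom_entry_above_diag[OF hom, of j k]
      graded0_outside[OF hom[unfolded is_hom_iff, THEN conjunct1], of k j]
    by auto
qed

lemma brick_if_length_less:
  fixes K :: "'k::field itself"
  assumes "snd U < n"
  shows "brick K n U"
  unfolding brick_def
proof (intro allI impI)
  fix f :: "nat \<Rightarrow> nat \<Rightarrow> 'k"
  assume hom: "is_hom K n U U f" and "f \<noteq> (\<lambda>_ _. 0)"
  define c where "c = f 0 0"
  have f: "f j k = (if j = k \<and> j < snd U then c else 0)" for j k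
    unfolding c_def by (rule endo_scalar[OF hom assms])
  have "c \<noteq> 0" using \<open>f \<noteq> (\<lambda>_ _. 0)\<close> f by (auto simp: fun_eq_iff)
  define g :: "nat \<Rightarrow> nat \<Rightarrow> 'k" where "g j k = (if j = k \<and> j < snd U then inverse c else 0)" for j k
  have "mmul (snd U) f g = idm K (snd U)" "mmul (snd U) g f = idm K (snd U)"
    using \<open>c \<noteq> 0\<close>
    by (auto simp: fun_eq_iff mmul_def idm_def f g_def if_distrib[of "\<lambda>x. x * _"] sum.delta
        cong: if_cong)
  then show "\<exists>g. mmul (snd U) f g = idm K (snd U) \<and> mmul (snd U) g f = idm K (snd U)" by blast
qed

lemma rigid_brick_iff_length_less:
  fixes K :: "'k::field itself"
  assumes "U \<in> indec n"
  shows "rigid_brick K n U \<longleftrightarrow> snd U < n"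
proof
  assume "rigid_brick K n U"
  then have "\<not> has_ext n U U"
    using ext_zero_iff_not_has_ext[of U K n U] assms unfolding rigid_brick_def indec_def by auto
  show "snd U < n"
  proof (rule ccontr)
    assume "\<not> snd U < n"
    then have "has_ext n U U" using assms unfolding has_ext_def indec_def
      by (intro exI[of _ n]) auto
    then show False using \<open>\<not> has_ext n U U\<close> by simp
  qed
next
  assume "snd U < n"
  have "\<not> has_ext n U U"
  proof
    assume "has_ext n U U"
    then obtain m where "1 \<le> m" "m \<le> snd U" "(fst U + m) mod n = (fst U + 0) mod n"
      unfolding has_ext_def by auto
    then show False
      using \<open>snd U < n\<close> mod_add_right_cancel_nat[of m "fst U" n 0] by (simp add: add.commute)
  qed
  then show "rigid_brick K n U"
    unfolding rigid_brick_def using brick_if_length_less[OF \<open>snd U < n\<close>] ext_zero_if_not_has_ext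
    by blast
qed

lemma rigid_indec_iff: "U \<in> rigid_indec n \<longleftrightarrow> U \<in> indec n \<and> rigid_brick K n U"
  using rigid_brick_iff_length_less[of U n K] unfolding rigid_indec_def indec_def by auto

definition arc_rel :: "nat \<Rightarrow> obj \<Rightarrow> obj \<Rightarrow> bool" where
  "arc_rel n X Y \<longleftrightarrow> has_hom n X Y \<or> has_ext n X Y"

lemma arc_rel_refl: "X \<in> rigid_indec n \<Longrightarrow> arc_rel n X X"
  unfolding arc_rel_def has_hom_def rigid_indec_def by (intro disjI1 exI[of _ "snd X"]) auto

lemma exc_seq_iff:
  "exc_seq K n xs \<longleftrightarrow>
     set xs \<subseteq> rigid_indec n \<and> (\<forall>i j. i < j \<and> j < length xs \<longrightarrow> \<not> arc_rel n (xs ! j) (xs ! i))"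
proof (cases "set xs \<subseteq> rigid_indec n")
  case True
  have pair: "hom_zero K n (xs ! j) (xs ! i) \<and> ext_zero K n (xs ! j) (xs ! i) \<longleftrightarrow>
      \<not> arc_rel n (xs ! j) (xs ! i)" if "i < j" "j < length xs" for i j
  proof -
    have "xs ! i \<in> rigid_indec n" using True that by auto
    then have "1 \<le> snd (xs ! i)" unfolding rigid_indec_def by auto
    then show ?thesis
      unfolding arc_rel_def hom_zero_iff_not_has_hom
      using ext_zero_iff_not_has_ext[of "xs ! i" K n "xs ! j"] by simp
  qed
  have "\<forall>V\<in>set xs. V \<in> indec n \<and> rigid_brick K n V"
    using True rigid_indec_iff[of _ n K] by blast
  then show ?thesis
    unfolding exc_seq_def using True pair by blast
next
  case False
  then show ?thesis unfolding exc_seq_def using rigid_indec_iff[of _ n K] by blast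
qed

definition exc_arc_set :: "nat \<Rightarrow> obj set \<Rightarrow> bool" where
  "exc_arc_set n S \<longleftrightarrow> S \<subseteq> rigid_indec n \<and> card S = n - 1 \<and> (\<exists>f. ranking (arc_rel n) S f)"

theorem exc_set_iff_exc_arc_set: "exc_set K n S \<longleftrightarrow> exc_arc_set n S"
proof
  assume "exc_set K n S"
  then obtain xs where xs: "exc_seq K n xs" "length xs = n - 1" "set xs = S"
    unfolding exc_set_def by blast
  then have sub: "set xs \<subseteq> rigid_indec n"
    and ord: "\<forall>i j. i < j \<and> j < length xs \<longrightarrow> \<not> arc_rel n (xs ! j) (xs ! i)"
    unfolding exc_seq_iff by auto
  have "distinct xs"
    unfolding distinct_conv_nth
  proof (intro allI impI notI)
    fix i j assume ij: "i < length xs" "j < length xs" "i \<noteq> j" and "xs ! i = xs ! j"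
    have "xs ! i \<in> rigid_indec n" using sub nth_mem[OF ij(1)] by auto
    then have "arc_rel n (xs ! i) (xs ! j)" "arc_rel n (xs ! j) (xs ! i)"
      using arc_rel_refl \<open>xs ! i = xs ! j\<close> by auto
    then show False using ord ij by (metis linorder_neqE_nat)
  qed
  then have "card S = n - 1" using xs distinct_card by metis
  then show "exc_arc_set n S"
    unfolding exc_arc_set_def using ranking_if_list[OF \<open>distinct xs\<close> ord] sub xs(3) by blast
next
  assume "exc_arc_set n S"
  then obtain f where S: "S \<subseteq> rigid_indec n" "card S = n - 1" "ranking (arc_rel n) S f"
    unfolding exc_arc_set_def by blast
  then obtain xs where "distinct xs" "set xs = S"
      "\<forall>i j. i < j \<and> j < length xs \<longrightarrow> \<not> arc_rel n (xs ! j) (xs ! i)"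
    using exists_list_if_ranking[OF _ S(3)] finite_subset[OF S(1)] by auto
  moreover from this have "length xs = n - 1" using S(2) distinct_card by metis
  ultimately show "exc_set K n S"
    unfolding exc_set_def exc_seq_iff using S(1) by blast
qed

section \<open>Ranked configurations of segments on a line\<close>

text \<open>
  A segment (a, b), a < b, stands for the interval module on the vertices a, ..., b - 1 of a
  linearly oriented quiver of type A; seg_hom and seg_ext are the conditions for nonzero Hom and
  Ext^1 between such modules (matched with has_hom and has_ext by wrap below).
\<close>

type_synonym seg = "nat \<times> nat"

definition seg_hom :: "seg \<Rightarrow> seg \<Rightarrow> bool" where
  "seg_hom X Y \<longleftrightarrow> fst Y \<le> fst X \<and> fst X < snd Y \<and> snd Y \<le> snd X"

definition seg_ext :: "seg \<Rightarrow> seg \<Rightarrow> bool" where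
  "seg_ext X Y \<longleftrightarrow> fst X < fst Y \<and> fst Y \<le> snd X \<and> snd X < snd Y"

definition seg_rel :: "seg \<Rightarrow> seg \<Rightarrow> bool" where
  "seg_rel X Y \<longleftrightarrow> seg_hom X Y \<or> seg_ext X Y"

definition segs :: "nat \<Rightarrow> nat \<Rightarrow> seg set" where
  "segs p q = {(a, b). p \<le> a \<and> a < b \<and> b \<le> q}"

definition covered_by :: "seg set \<Rightarrow> nat \<Rightarrow> bool" where
  "covered_by T v \<longleftrightarrow> (\<exists>(a, b)\<in>T. a \<le> v \<and> v < b)"

definition crossed_by :: "seg set \<Rightarrow> nat \<Rightarrow> bool" where
  "crossed_by T k \<longleftrightarrow> (\<exists>(a, b)\<in>T. a < k \<and> k < b)"

lemma not_covered_byD: "\<not> covered_by T v \<Longrightarrow> (a, b) \<in> T \<Longrightarrow> \<not> (a \<le> v \<and> v < b)"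
  unfolding covered_by_def by blast

lemma covered_by_mono: "covered_by T v \<Longrightarrow> T \<subseteq> T' \<Longrightarrow> covered_by T' v"
  unfolding covered_by_def by blast

lemma mem_segs [simp]: "(a, b) \<in> segs p q \<longleftrightarrow> p \<le> a \<and> a < b \<and> b \<le> q"
  by (simp add: segs_def)

lemma finite_segs [simp]: "finite (segs p q)"
  by (rule finite_subset[of _ "{p..q} \<times> {p..q}"]) (auto simp: segs_def)

lemma segs_empty [simp]: "q \<le> p \<Longrightarrow> segs p q = {}"
  by (auto simp: segs_def)

lemma not_seg_rel_right_left:
  assumes "X \<in> segs p k" "Y \<in> segs k' q" "k \<le> k'"
  shows "\<not> seg_rel Y X"
  using assms by (auto simp: segs_def seg_rel_def seg_hom_def seg_ext_def)

lemma not_seg_rel_left_right: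
  assumes "X \<in> segs p v" "Y \<in> segs v' q" "v < v'"
  shows "\<not> seg_rel X Y"
  using assms by (auto simp: segs_def seg_rel_def seg_hom_def seg_ext_def)

lemma ranked_segs_noncrossing:
  assumes "ranking seg_rel T f" "(a, b) \<in> T" "(c, d) \<in> T" "a < c" "c < b" "b < d"
  shows False
proof -
  have "f (c, d) < f (a, b)"
    using rankingD[OF assms(1,3,2)] assms(4-6) unfolding seg_rel_def seg_hom_def by auto
  moreover have "f (a, b) < f (c, d)"
    using rankingD[OF assms(1,2,3)] assms(4-6) unfolding seg_rel_def seg_ext_def by auto
  ultimately show False by simp
qed

lemma longest_seg_not_crossed:
  assumes "finite T" "ranking seg_rel T f" "(p, b) \<in> T" "p < b" "\<not> crossed_by T p"
  obtains k where "(p, k) \<in> T" "b \<le> k" "\<not> crossed_by T k"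
proof
  define k where "k = Max {d. (p, d) \<in> T}"
  have fin: "finite {d. (p, d) \<in> T}"
    using finite_imageI[OF assms(1), of snd] by (rule finite_subset[rotated]) force
  show "(p, k) \<in> T" "b \<le> k"
    using Max_in[OF fin] Max_ge[OF fin] assms(3) unfolding k_def by auto
  show "\<not> crossed_by T k"
    unfolding crossed_by_def
  proof clarify
    fix a b' assume ab': "(a, b') \<in> T" "a < k" "k < b'"
    consider "a < p" | "a = p" | "p < a" by linarith
    then show False
    proof cases
      case 1
      then show False using assms(5) ab' \<open>b \<le> k\<close> \<open>p < b\<close> unfolding crossed_by_def by auto
    next
      case 2
      then show False using Max_ge[OF fin, of b'] ab' unfolding k_def by simp
    next
      case 3
      then show False using ranked_segs_noncrossing[OF assms(2) \<open>(p, k) \<in> T\<close> ab'(1)] ab' by simp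
    qed
  qed
qed

lemma ranked_chain_start_le_end:
  assumes fin: "finite A" and rk: "ranking seg_rel A f" and wf: "\<forall>(a, b)\<in>A. a < b"
    and "p < q" and "\<forall>v. p \<le> v \<and> v < q \<longrightarrow> covered_by A v"
    and "\<not> crossed_by A p" and "\<not> crossed_by A q"
  shows "\<exists>d c. (p, d) \<in> A \<and> (c, q) \<in> A \<and> f (p, d) \<le> f (c, q)"
  using assms(4-6)
proof (induction "q - p" arbitrary: p rule: less_induct)
  case less
  obtain a b where "(a, b) \<in> A" "a \<le> p" "p < b"
    using less.prems(1,2) unfolding covered_by_def by blast
  then have "(p, b) \<in> A" using less.prems(3) unfolding crossed_by_def by (cases "a = p") auto
  then obtain d where d: "(p, d) \<in> A" "b \<le> d" "\<not> crossed_by A d"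
    using longest_seg_not_crossed[OF fin rk _ \<open>p < b\<close> less.prems(3)] by blast
  have "d \<le> q" using \<open>\<not> crossed_by A q\<close> d \<open>p < b\<close> less.prems(1) unfolding crossed_by_def by force
  show ?case
  proof (cases "d = q")
    case True
    then show ?thesis using d by blast
  next
    case False
    \<comment> \<open>continue the chain from the end point d, which is Ext-related to (p, d)\<close>
    then obtain d' c where "(d, d') \<in> A" "(c, q) \<in> A" "f (d, d') \<le> f (c, q)"
      using less.hyps[of d] less.prems(2) d \<open>d \<le> q\<close> \<open>p < b\<close> by fastforce
    moreover have "seg_ext (p, d) (d, d')"
      using wf \<open>(d, d') \<in> A\<close> d(2) \<open>p < b\<close> unfolding seg_ext_def by auto
    then have "f (p, d) < f (d, d')"
      using rankingD[OF rk d(1) \<open>(d, d') \<in> A\<close>] d(2) \<open>p < b\<close> unfolding seg_rel_def by auto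
    ultimately show ?thesis using d(1) by force
  qed
qed

lemma exists_uncovered_under_span:
  assumes rk: "ranking seg_rel T f" and sub: "T \<subseteq> segs p q" and span: "(p, q) \<in> T"
  shows "\<exists>w. p \<le> w \<and> w < q \<and> \<not> covered_by (T - {(p, q)}) w"
proof (rule ccontr)
  assume uncov: "\<not> ?thesis"
  define A where "A = T - {(p, q)}"
  have "A \<subseteq> T" "A \<subseteq> segs p q" using sub unfolding A_def by auto
  have "finite A" using finite_subset[OF \<open>A \<subseteq> segs p q\<close> finite_segs] .
  moreover have "\<forall>(a, b)\<in>A. a < b" "\<not> crossed_by A p" "\<not> crossed_by A q"
    using \<open>A \<subseteq> segs p q\<close> unfolding segs_def crossed_by_def by auto
  moreover have "p < q" using sub span unfolding segs_def by auto
  moreover have "\<forall>v. p \<le> v \<and> v < q \<longrightarrow> covered_by A v" using uncov unfolding A_def by blast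
  ultimately obtain d c where dc: "(p, d) \<in> A" "(c, q) \<in> A" "f (p, d) \<le> f (c, q)"
    using ranked_chain_start_le_end[OF _ ranking_subset[OF rk \<open>A \<subseteq> T\<close>]] by blast
  \<comment> \<open>but (p, q) maps onto (p, d) and receives a map from (c, q)\<close>
  have "seg_hom (p, q) (p, d)" "seg_hom (c, q) (p, q)"
    using dc \<open>A \<subseteq> segs p q\<close> unfolding seg_hom_def segs_def by auto
  moreover have "(p, d) \<noteq> (p, q)" "(c, q) \<noteq> (p, q)" "(p, d) \<in> T" "(c, q) \<in> T"
    using dc unfolding A_def by auto
  ultimately have "f (p, q) < f (p, d)" "f (c, q) < f (p, q)"
    using rankingD[OF rk] span unfolding seg_rel_def by metis+
  then show False using dc(3) by simp
qed

lemma segs_split_at_vertex: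
  assumes "T \<subseteq> segs p q" "\<not> covered_by T w"
  shows "T = (T \<inter> segs p w) \<union> (T \<inter> segs (Suc w) q)"
  using assms unfolding segs_def covered_by_def by fastforce

lemma segs_split_at_point:
  assumes "T \<subseteq> segs p q" "\<not> crossed_by T k"
  shows "T = (T \<inter> segs p k) \<union> (T \<inter> segs k q)"
  using assms unfolding segs_def crossed_by_def by fastforce

lemma card_ranked_segs_le:
  assumes "ranking seg_rel T f" "T \<subseteq> segs p q"
  shows "card T \<le> q - p"
  using assms
proof (induction "q - p" arbitrary: p q T rule: less_induct)
  case less
  note rk = less.prems(1) and sub = less.prems(2)
  have "finite T" using finite_subset[OF sub] by simp
  have IH: "card (S \<inter> segs p' q') \<le> q' - p'" if "S \<subseteq> T" "q' - p' < q - p" for S p' q'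
  proof -
    have "S \<inter> segs p' q' \<subseteq> T" using that(1) by blast
    from less.hyps[OF that(2) ranking_subset[OF rk this] Int_lower2] show ?thesis .
  qed
  have split_vertex: "card S \<le> q - p - 1"
    if "S \<subseteq> T" "S \<subseteq> segs p q" "p \<le> w" "w < q" "\<not> covered_by S w" for S w
  proof -
    have "card S \<le> card (S \<inter> segs p w) + card (S \<inter> segs (Suc w) q)"
      by (subst (1) segs_split_at_vertex[OF that(2,5)]) (rule card_Un_le)
    also have "\<dots> \<le> (w - p) + (q - Suc w)" using IH[OF that(1)] that(3,4) by (intro add_mono) auto
    finally show ?thesis using that(3,4) by linarith
  qed
  show ?case
  proof (cases "p < q")
    case False
    then show ?thesis using sub by simp
  next
    case True
    consider "(p, q) \<in> T" | "\<not> covered_by T p" | b where "(p, b) \<in> T" "(p, q) \<notin> T"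
      using sub unfolding covered_by_def segs_def by fastforce
    then show ?thesis
    proof cases
      case 1
      obtain w where "p \<le> w" "w < q" "\<not> covered_by (T - {(p, q)}) w"
        using exists_uncovered_under_span[OF rk sub 1] by blast
      then have "card (T - {(p, q)}) \<le> q - p - 1" using sub by (intro split_vertex) auto
      moreover have "0 < card T" using 1 \<open>finite T\<close> card_gt_0_iff by blast
      ultimately show ?thesis using 1 \<open>finite T\<close> True by (simp add: card_Diff_singleton)
    next
      case 2
      then show ?thesis using split_vertex[of T p] sub True by simp
    next
      case 3
      then have "p < b" using sub by auto
      moreover have "\<not> crossed_by T p" using sub unfolding crossed_by_def segs_def by auto
      ultimately obtain k where k: "(p, k) \<in> T" "\<not> crossed_by T k"
        using longest_seg_not_crossed[OF \<open>finite T\<close> rk 3(1)] by blast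
      moreover from this have "(p, k) \<in> segs p q" using sub by blast
      moreover have "k \<noteq> q" using 3(2) k(1) by auto
      ultimately have "p < k" "k < q" by auto
      have "card T \<le> card (T \<inter> segs p k) + card (T \<inter> segs k q)"
        by (subst (1) segs_split_at_point[OF sub k(2)]) (rule card_Un_le)
      also have "\<dots> \<le> (k - p) + (q - k)" using IH[of T] \<open>p < k\<close> \<open>k < q\<close> by (intro add_mono) auto
      finally show ?thesis using \<open>p < k\<close> \<open>k < q\<close> by simp
    qed
  qed
qed

text \<open>The exceptional sets of the linear quiver on the vertices p, ..., q - 1:\<close>

definition seg_configs :: "nat \<Rightarrow> nat \<Rightarrow> seg set set" where
  "seg_configs p q = {T. T \<subseteq> segs p q \<and> card T = q - p \<and> (\<exists>f. ranking seg_rel T f)}"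

definition spanning_configs :: "nat \<Rightarrow> nat \<Rightarrow> seg set set" where
  "spanning_configs p q = {T \<in> seg_configs p q. (p, q) \<in> T}"

lemma finite_seg_configs [simp]: "finite (seg_configs p q)"
  by (rule finite_subset[of _ "Pow (segs p q)"]) (auto simp: seg_configs_def)

lemma finite_spanning_configs [simp]: "finite (spanning_configs p q)"
  by (simp add: spanning_configs_def)

lemma seg_configsD:
  assumes "T \<in> seg_configs p q"
  shows "T \<subseteq> segs p q" "card T = q - p" "\<exists>f. ranking seg_rel T f" "finite T"
  using assms finite_subset[of T "segs p q"] unfolding seg_configs_def by auto

lemma seg_configs_trivial: "q \<le> p \<Longrightarrow> seg_configs p q = {{}}"
  by (auto simp: seg_configs_def ranking_def)

lemma segs_disjoint: "v \<le> v' \<Longrightarrow> segs p v \<inter> segs v' q = {}"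
  by (auto simp: segs_def)

lemma seg_config_covered:
  assumes T: "T \<in> seg_configs p q" and "p \<le> w" "w < q"
  shows "covered_by T w"
proof (rule ccontr)
  assume "\<not> covered_by T w"
  obtain f where rk: "ranking seg_rel T f" using seg_configsD(3)[OF T] by blast
  have "card T \<le> card (T \<inter> segs p w) + card (T \<inter> segs (Suc w) q)"
    by (subst (1) segs_split_at_vertex[OF seg_configsD(1)[OF T] \<open>\<not> covered_by T w\<close>])
      (rule card_Un_le)
  also have "\<dots> \<le> (w - p) + (q - Suc w)"
    using card_ranked_segs_le ranking_subset[OF rk] by (intro add_mono) (meson inf_le1 inf_le2)+
  finally show False using seg_configsD(2)[OF T] assms(2,3) by linarith
qed

lemma seg_configs_of_split:
  assumes "ranking seg_rel T f" "T = L \<union> R" "L \<subseteq> segs p v" "R \<subseteq> segs v' q" "v \<le> v'"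
    and "card T = (v - p) + (q - v')"
  shows "L \<in> seg_configs p v" "R \<in> seg_configs v' q"
proof -
  have "L \<inter> R = {}" using segs_disjoint[OF assms(5)] assms(3,4) by blast
  moreover have "finite L" "finite R"
    using finite_subset[OF assms(3) finite_segs] finite_subset[OF assms(4) finite_segs] .
  ultimately have "card T = card L + card R" using assms(2) card_Un_disjoint by metis
  moreover have rk: "ranking seg_rel L f" "ranking seg_rel R f"
    using ranking_subset[OF assms(1)] assms(2) by auto
  moreover note card_ranked_segs_le[OF rk(1) assms(3)] card_ranked_segs_le[OF rk(2) assms(4)]
  ultimately show "L \<in> seg_configs p v" "R \<in> seg_configs v' q"
    using assms(3,4,6) unfolding seg_configs_def by auto
qed

lemma seg_configs_decompose:
  assumes T: "T \<in> seg_configs p q" and "p < q"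
  obtains k where "p < k" "k \<le> q" "T \<inter> segs p k \<in> spanning_configs p k"
    "T \<inter> segs k q \<in> seg_configs k q" "T = (T \<inter> segs p k) \<union> (T \<inter> segs k q)"
proof -
  note sub = seg_configsD(1)[OF T]
  obtain f where rk: "ranking seg_rel T f" using seg_configsD(3)[OF T] by blast
  obtain a b where "(a, b) \<in> T" "a \<le> p" "p < b"
    using seg_config_covered[OF T order.refl \<open>p < q\<close>] unfolding covered_by_def by blast
  moreover from this have "(a, b) \<in> segs p q" using sub by blast
  ultimately have "(p, b) \<in> T" "p < b" unfolding segs_def by auto
  moreover have "\<not> crossed_by T p" using sub unfolding crossed_by_def segs_def by auto
  ultimately obtain k where k: "(p, k) \<in> T" "\<not> crossed_by T k"
    using longest_seg_not_crossed[OF seg_configsD(4)[OF T] rk] by blast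
  from k(1) have "(p, k) \<in> segs p q" using sub by blast
  then have "p < k" "k \<le> q" unfolding segs_def by auto
  have split: "T = (T \<inter> segs p k) \<union> (T \<inter> segs k q)" by (rule segs_split_at_point[OF sub k(2)])
  have "card T = (k - p) + (q - k)" using seg_configsD(2)[OF T] \<open>p < k\<close> \<open>k \<le> q\<close> by simp
  then have "T \<inter> segs p k \<in> seg_configs p k" "T \<inter> segs k q \<in> seg_configs k q"
    using seg_configs_of_split[OF rk split Int_lower2 Int_lower2 order.refl] by auto
  moreover have "(p, k) \<in> T \<inter> segs p k" using k(1) \<open>p < k\<close> unfolding segs_def by simp
  ultimately show ?thesis using that \<open>p < k\<close> \<open>k \<le> q\<close> split unfolding spanning_configs_def by blast
qed

lemma seg_configs_compose:
  assumes A: "A \<in> spanning_configs p k" and B: "B \<in> seg_configs k q" and "k \<le> q"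
  shows "A \<union> B \<in> seg_configs p q"
proof -
  have A': "A \<in> seg_configs p k" "(p, k) \<in> A" using A unfolding spanning_configs_def by auto
  note subA = seg_configsD(1)[OF A'(1)] and subB = seg_configsD(1)[OF B]
  have "p < k" using A'(2) subA unfolding segs_def by auto
  obtain f g where "ranking seg_rel A f" "ranking seg_rel B g"
    using seg_configsD(3)[OF A'(1)] seg_configsD(3)[OF B] by blast
  then have "\<exists>h. ranking seg_rel (A \<union> B) h"
    using ranking_Un seg_configsD(4)[OF A'(1)] not_seg_rel_right_left subA subB by blast
  moreover have "A \<inter> B = {}" using segs_disjoint[of k k p q] subA subB by blast
  then have "card (A \<union> B) = q - p"
    using seg_configsD(2,4)[OF A'(1)] seg_configsD(2,4)[OF B] \<open>p < k\<close> \<open>k \<le> q\<close>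
    by (simp add: card_Un_disjoint)
  moreover have "A \<union> B \<subseteq> segs p q" using subA subB \<open>p < k\<close> \<open>k \<le> q\<close> unfolding segs_def by auto
  ultimately show ?thesis unfolding seg_configs_def by blast
qed

lemma Un_inter_segs:
  assumes "A \<subseteq> segs p v" "B \<subseteq> segs v' q" "v \<le> v'"
  shows "(A \<union> B) \<inter> segs p v = A" "(A \<union> B) \<inter> segs v' q = B"
  using assms segs_disjoint[OF assms(3), of p q] by blast+

lemma seg_configs_glue_unique:
  assumes sub: "A \<subseteq> segs p k" "B \<subseteq> segs k q" "A' \<subseteq> segs p k'" "B' \<subseteq> segs k' q"
    and span: "(p, k) \<in> A" "(p, k') \<in> A'" and eq: "A \<union> B = A' \<union> B'"
  shows "k = k' \<and> A = A' \<and> B = B'"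
proof -
  \<comment> \<open>the spanning segment (p, k) of A cannot lie in B', so it lies in A'\<close>
  have "(p, k) \<in> A' \<union> B'" "(p, k') \<in> A \<union> B" using eq span by auto
  moreover have "(p, k) \<in> segs p k" "(p, k') \<in> segs p k'" using span sub by blast+
  ultimately have "(p, k) \<in> A'" "(p, k') \<in> A" using sub by auto
  then have "k = k'" using sub by fastforce
  then show ?thesis using eq Un_inter_segs[OF sub(1,2)] Un_inter_segs[OF sub(3,4)] by auto
qed

lemma card_seg_configs_rec:
  assumes "p < q"
  shows "card (seg_configs p q) =
    (\<Sum>k\<in>{p<..q}. card (spanning_configs p k) * card (seg_configs k q))"
proof -
  define \<Sigma> where "\<Sigma> = (SIGMA k:{p<..q}. spanning_configs p k \<times> seg_configs k q)"
  define glue :: "nat \<times> seg set \<times> seg set \<Rightarrow> seg set" where "glue = (\<lambda>(k, A, B). A \<union> B)"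
  have "seg_configs p q = glue ` \<Sigma>"
  proof (intro equalityI subsetI)
    fix T assume "T \<in> seg_configs p q"
    then obtain k where "p < k" "k \<le> q" "T \<inter> segs p k \<in> spanning_configs p k"
      "T \<inter> segs k q \<in> seg_configs k q" "T = (T \<inter> segs p k) \<union> (T \<inter> segs k q)"
      using seg_configs_decompose \<open>p < q\<close> by metis
    then show "T \<in> glue ` \<Sigma>"
      unfolding \<Sigma>_def glue_def by (intro image_eqI[of _ _ "(k, T \<inter> segs p k, T \<inter> segs k q)"]) auto
  qed (auto simp: \<Sigma>_def glue_def intro: seg_configs_compose)
  moreover have "inj_on glue \<Sigma>"
  proof (rule inj_onI)
    fix x y assume "x \<in> \<Sigma>" "y \<in> \<Sigma>" "glue x = glue y"
    moreover obtain k A B k' A' B' where xy: "x = (k, A, B)" "y = (k', A', B')"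
      by (cases x, cases y)
    ultimately have "A \<in> seg_configs p k" "B \<in> seg_configs k q" "A' \<in> seg_configs p k'"
      "B' \<in> seg_configs k' q" "(p, k) \<in> A" "(p, k') \<in> A'" "A \<union> B = A' \<union> B'"
      unfolding \<Sigma>_def glue_def spanning_configs_def by auto
    then show "x = y"
      using seg_configs_glue_unique[OF seg_configsD(1) seg_configsD(1) seg_configsD(1)
          seg_configsD(1)] xy
      by simp
  qed
  ultimately have "card (seg_configs p q) = card \<Sigma>" by (simp add: card_image)
  also have "\<dots> = (\<Sum>k\<in>{p<..q}. card (spanning_configs p k) * card (seg_configs k q))"
    unfolding \<Sigma>_def by (simp add: card_cartesian_product)
  finally show ?thesis .
qed

lemma spanning_configs_decompose:
  assumes T: "T \<in> spanning_configs p k"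
  defines "T' \<equiv> T - {(p, k)}"
  obtains v where "p \<le> v" "v < k" "T' \<inter> segs p v \<in> seg_configs p v"
    "T' \<inter> segs (Suc v) k \<in> seg_configs (Suc v) k"
    "T = insert (p, k) ((T' \<inter> segs p v) \<union> (T' \<inter> segs (Suc v) k))"
proof -
  have TC: "T \<in> seg_configs p k" and span: "(p, k) \<in> T" using T unfolding spanning_configs_def
    by auto
  note sub = seg_configsD(1)[OF TC]
  obtain f where rk: "ranking seg_rel T f" using seg_configsD(3)[OF TC] by blast
  obtain v where v: "p \<le> v" "v < k" "\<not> covered_by T' v"
    using exists_uncovered_under_span[OF rk sub span] unfolding T'_def by blast
  have "T' \<subseteq> segs p k" using sub unfolding T'_def by blast
  have split: "T' = (T' \<inter> segs p v) \<union> (T' \<inter> segs (Suc v) k)"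
    by (rule segs_split_at_vertex[OF \<open>T' \<subseteq> segs p k\<close> v(3)])
  have "card T' = (v - p) + (k - Suc v)"
    using seg_configsD(2,4)[OF TC] span v(1,2) unfolding T'_def by simp
  then have "T' \<inter> segs p v \<in> seg_configs p v" "T' \<inter> segs (Suc v) k \<in> seg_configs (Suc v) k"
    using seg_configs_of_split[OF ranking_subset[OF rk] split Int_lower2 Int_lower2]
    unfolding T'_def by auto
  moreover have "T = insert (p, k) T'" using span unfolding T'_def by blast
  ultimately show ?thesis using that v(1,2) split by metis
qed

lemma spanning_configs_compose:
  assumes L: "L \<in> seg_configs p v" and R: "R \<in> seg_configs (Suc v) k" and "p \<le> v" "v < k"
  shows "insert (p, k) (L \<union> R) \<in> spanning_configs p k"
proof -
  note subL = seg_configsD(1)[OF L] and subR = seg_configsD(1)[OF R]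
  obtain f g where rk: "ranking seg_rel L f" "ranking seg_rel R g"
    using seg_configsD(3)[OF L] seg_configsD(3)[OF R] by blast
  \<comment> \<open>rank R first, then (p, k), then L: nothing in L is related to R or to (p, k)\<close>
  have "\<forall>X\<in>R. \<not> seg_rel (p, k) X"
  proof
    fix X assume "X \<in> R"
    then have "X \<in> segs (Suc v) k" using subR by blast
    then show "\<not> seg_rel (p, k) X" using \<open>p \<le> v\<close>
      by (cases X) (auto simp: seg_rel_def seg_hom_def seg_ext_def)
  qed
  then obtain h where "ranking seg_rel (R \<union> {(p, k)}) h"
    using ranking_Un[OF rk(2), of "{(p, k)}" "\<lambda>_. 0"] seg_configsD(4)[OF R]
    by (auto simp: ranking_def)
  moreover have "\<forall>X\<in>R \<union> {(p, k)}. \<forall>Y\<in>L. \<not> seg_rel Y X"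
  proof (intro ballI)
    fix X Y assume X: "X \<in> R \<union> {(p, k)}" and "Y \<in> L"
    then have "Y \<in> segs p v" using subL by blast
    show "\<not> seg_rel Y X"
    proof (cases "X = (p, k)")
      case True
      then show ?thesis using \<open>Y \<in> segs p v\<close> \<open>v < k\<close>
        by (cases Y) (auto simp: seg_rel_def seg_hom_def seg_ext_def)
    next
      case False
      then have "X \<in> segs (Suc v) k" using X subR by blast
      then show ?thesis using not_seg_rel_left_right[OF \<open>Y \<in> segs p v\<close>] by blast
    qed
  qed
  moreover have "finite (R \<union> {(p, k)})" using seg_configsD(4)[OF R] by simp
  moreover have "R \<union> {(p, k)} \<union> L = insert (p, k) (L \<union> R)" by blast
  ultimately have "\<exists>h. ranking seg_rel (insert (p, k) (L \<union> R)) h"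
    using ranking_Un[OF _ rk(1)] by metis
  moreover have "(p, k) \<notin> L \<union> R" "L \<inter> R = {}"
    using subL subR \<open>v < k\<close> \<open>p \<le> v\<close> segs_disjoint[of v "Suc v" p k] by auto
  then have "card (insert (p, k) (L \<union> R)) = k - p"
    using seg_configsD(2,4)[OF L] seg_configsD(2,4)[OF R] \<open>p \<le> v\<close> \<open>v < k\<close>
    by (simp add: card_Un_disjoint)
  moreover have "insert (p, k) (L \<union> R) \<subseteq> segs p k" using subL subR \<open>p \<le> v\<close> \<open>v < k\<close> by auto
  ultimately show ?thesis unfolding spanning_configs_def seg_configs_def by blast
qed

lemma spanning_configs_glue_unique:
  assumes conf: "L \<in> seg_configs p v" "R \<in> seg_configs (Suc v) k"
    "L' \<in> seg_configs p v'" "R' \<in> seg_configs (Suc v') k"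
    and "p \<le> v" "v < k" "p \<le> v'" "v' < k"
    and eq: "insert (p, k) (L \<union> R) = insert (p, k) (L' \<union> R')"
  shows "v = v' \<and> L = L' \<and> R = R'"
proof -
  note sub = seg_configsD(1)[OF conf(1)] seg_configsD(1)[OF conf(2)]
    seg_configsD(1)[OF conf(3)] seg_configsD(1)[OF conf(4)]
  have "(p, k) \<notin> segs p v" "(p, k) \<notin> segs (Suc v) k" "(p, k) \<notin> segs p v'" "(p, k) \<notin> segs (Suc v') k"
    using assms(5-8) by auto
  then have "(p, k) \<notin> L \<union> R" "(p, k) \<notin> L' \<union> R'" using sub by blast+
  then have eq': "L \<union> R = L' \<union> R'" using eq by (simp add: insert_ident)
  \<comment> \<open>v is the only vertex in p..<k not covered by L \<union> R\<close>
  have uncov: "\<not> covered_by (L \<union> R) v" "\<not> covered_by (L' \<union> R') v'"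
    using sub unfolding covered_by_def by fastforce+
  have "v = v'"
  proof (rule ccontr)
    assume "v \<noteq> v'"
    then have "covered_by L' v \<or> covered_by L v'"
      using seg_config_covered[OF conf(3), of v] seg_config_covered[OF conf(1), of v'] assms(5,7)
      by (cases "v < v'") auto
    then show False using uncov eq' unfolding covered_by_def by blast
  qed
  then show ?thesis using eq' Un_inter_segs[OF sub(1,2)] Un_inter_segs[OF sub(3,4)] by auto
qed

lemma card_spanning_configs_rec:
  assumes "p < k"
  shows "card (spanning_configs p k) =
    (\<Sum>v\<in>{p..<k}. card (seg_configs p v) * card (seg_configs (Suc v) k))"
proof -
  define \<Sigma> where "\<Sigma> = (SIGMA v:{p..<k}. seg_configs p v \<times> seg_configs (Suc v) k)"
  define glue :: "nat \<times> seg set \<times> seg set \<Rightarrow> seg set"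
    where "glue = (\<lambda>(v, L, R). insert (p, k) (L \<union> R))"
  have "spanning_configs p k = glue ` \<Sigma>"
  proof (intro equalityI subsetI)
    fix T assume "T \<in> spanning_configs p k"
    then obtain v where "p \<le> v" "v < k" "(T - {(p, k)}) \<inter> segs p v \<in> seg_configs p v"
      "(T - {(p, k)}) \<inter> segs (Suc v) k \<in> seg_configs (Suc v) k"
      "T = insert (p, k) (((T - {(p, k)}) \<inter> segs p v) \<union> ((T - {(p, k)}) \<inter> segs (Suc v) k))"
      by (rule spanning_configs_decompose)
    then show "T \<in> glue ` \<Sigma>"
      unfolding \<Sigma>_def glue_def
      by (intro image_eqI[of _ _
            "(v, (T - {(p, k)}) \<inter> segs p v, (T - {(p, k)}) \<inter> segs (Suc v) k)"]) auto
  qed (auto simp: \<Sigma>_def glue_def intro: spanning_configs_compose)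
  moreover have "inj_on glue \<Sigma>"
  proof (rule inj_onI)
    fix x y assume "x \<in> \<Sigma>" "y \<in> \<Sigma>" "glue x = glue y"
    moreover obtain v L R v' L' R' where xy: "x = (v, L, R)" "y = (v', L', R')"
      by (cases x, cases y)
    ultimately have conf: "L \<in> seg_configs p v" "R \<in> seg_configs (Suc v) k"
      "L' \<in> seg_configs p v'" "R' \<in> seg_configs (Suc v') k" "p \<le> v" "v < k" "p \<le> v'" "v' < k"
      "insert (p, k) (L \<union> R) = insert (p, k) (L' \<union> R')"
      unfolding \<Sigma>_def glue_def by auto
    show "x = y" using spanning_configs_glue_unique[OF conf] xy by simp
  qed
  ultimately have "card (spanning_configs p k) = card \<Sigma>" by (simp add: card_image)
  also have "\<dots> = (\<Sum>v\<in>{p..<k}. card (seg_configs p v) * card (seg_configs (Suc v) k))"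
    unfolding \<Sigma>_def by (simp add: card_cartesian_product)
  finally show ?thesis .
qed

section \<open>Counting configurations with Raney numbers\<close>

text \<open>
  The Raney numbers raney r m = r / (3m + r) * (3m + r choose m) count forests of r ternary trees
  with m internal nodes; raney 1 m = (3m)! / (m! (2m + 1)!) is the Fuss-Catalan sequence.
\<close>

fun raney :: "nat \<Rightarrow> nat \<Rightarrow> real" where
  "raney 0 m = (if m = 0 then 1 else 0)"
| "raney (Suc s) m = real (Suc s) * fact (3 * m + s) / (fact m * fact (2 * m + Suc s))"

declare raney.simps(2) [simp del]

lemma raney_0_right [simp]: "raney r 0 = 1"
  by (cases r) (simp_all add: raney.simps(2) del: fact_Suc, simp)

lemma raney_1_Suc: "raney 1 (Suc m) = raney 3 m"
proof -
  define X :: real where "X = fact (3 * m + 2)"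
  define F :: real where "F = fact m"
  define G :: real where "G = fact (2 * m + 3)"
  define a where "a = real (Suc m)"
  have "a > 0" unfolding a_def by simp
  have "3 * Suc m + 0 = Suc (3 * m + 2)" "2 * Suc m + Suc 0 = 2 * m + 3" by simp_all
  then have "raney 1 (Suc m) = 3 * a * X / (a * F * G)"
    unfolding One_nat_def raney.simps X_def F_def G_def a_def
    by (simp only: fact_Suc of_nat_mult) (simp add: algebra_simps)
  also have "\<dots> = 3 * X / (F * G)"
    using \<open>a > 0\<close> by simp
  also have "\<dots> = raney 3 m"
    unfolding numeral_3_eq_3 raney.simps X_def F_def G_def by (simp add: algebra_simps)
  finally show ?thesis .
qed

lemma raney_Suc_Suc_Suc: "raney (Suc (Suc t)) (Suc m) = raney (Suc t) (Suc m) + raney (t + 4) m"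
proof -
  define X :: real where "X = fact (3 * m + t + 3)"
  define F :: real where "F = fact m"
  define G :: real where "G = fact (2 * m + t + 3)"
  have "F > 0" "G > 0" unfolding F_def G_def by auto
  define a b where "a = real (Suc m)" and "b = real (2 * m + t + 4)"
  have "a > 0" "b > 0" unfolding a_def b_def by auto
  have "3 * Suc m + Suc t = Suc (3 * m + t + 3)" "2 * Suc m + Suc (Suc t) = Suc (2 * m + t + 3)"
    "3 * Suc m + t = 3 * m + t + 3" "2 * Suc m + Suc t = 2 * m + t + 3"
    "3 * m + (t + 3) = 3 * m + t + 3" "2 * m + Suc (t + 3) = Suc (2 * m + t + 3)"
    by simp_all
  then have lhs: "raney (Suc (Suc t)) (Suc m) =
      real (t + 2) * (real (3 * m + t + 4) * X) / ((a * F) * (b * G))"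
    and rhs1: "raney (Suc t) (Suc m) = real (t + 1) * X / ((a * F) * G)"
    and rhs2: "raney (Suc (t + 3)) m = real (t + 4) * X / (F * (b * G))"
    unfolding raney.simps X_def F_def G_def a_def b_def
    by (simp_all only: fact_Suc of_nat_mult) (simp_all add: algebra_simps)
  have frac: "(q * b + r * a) * X / ((a * F) * (b * G)) =
      q * X / ((a * F) * G) + r * X / (F * (b * G))"
    for q r :: real
    using \<open>a > 0\<close> \<open>b > 0\<close> \<open>F > 0\<close> \<open>G > 0\<close> by (simp add: field_simps)
  have "real (t + 2) * (real (3 * m + t + 4) * X) = (real (t + 1) * b + real (t + 4) * a) * X"
    unfolding a_def b_def by (simp add: algebra_simps)
  then have "raney (Suc (Suc t)) (Suc m) =
      (real (t + 1) * b + real (t + 4) * a) * X / ((a * F) * (b * G))"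
    unfolding lhs by simp
  also have "\<dots> = raney (Suc t) (Suc m) + raney (Suc (t + 3)) m"
    unfolding frac rhs1 rhs2 ..
  finally show ?thesis by (simp add: numeral_eq_Suc)
qed

lemma raney_Suc_Suc: "raney (Suc s) (Suc m) = raney s (Suc m) + raney (s + 3) m"
proof (cases s)
  case 0
  then show ?thesis using raney_1_Suc[of m] by simp
next
  case (Suc t)
  then show ?thesis using raney_Suc_Suc_Suc[of t m] by (simp add: add.commute)
qed

lemma raney_convolution: "(\<Sum>k\<le>m. raney r k * raney s (m - k)) = raney (r + s) m"
proof (induction m arbitrary: r)
  case 0
  then show ?case by simp
next
  case (Suc m)
  note IH_m = Suc.IH
  show ?case
  proof (induction r)
    case 0
    show ?case by (subst sum.atMost_Suc_shift) simp
  next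
    case (Suc r)
    have "(\<Sum>k\<le>Suc m. raney (Suc r) k * raney s (Suc m - k))
        = raney s (Suc m) + (\<Sum>k\<le>m. raney r (Suc k) * raney s (m - k))
          + (\<Sum>k\<le>m. raney (r + 3) k * raney s (m - k))"
      by (subst sum.atMost_Suc_shift) (simp add: raney_Suc_Suc algebra_simps sum.distrib)
    also have "raney s (Suc m) + (\<Sum>k\<le>m. raney r (Suc k) * raney s (m - k))
        = (\<Sum>k\<le>Suc m. raney r k * raney s (Suc m - k))"
      by (subst sum.atMost_Suc_shift) simp
    also have "\<dots> = raney (r + s) (Suc m)" by (rule Suc.IH)
    also have "(\<Sum>k\<le>m. raney (r + 3) k * raney s (m - k)) = raney (r + 3 + s) m" by (rule IH_m)
    finally show ?case using raney_Suc_Suc[of "r + s" m] by (simp add: algebra_simps)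
  qed
qed

lemma raney_1_Suc_ternary:
  "raney 1 (Suc m) = (\<Sum>j\<le>m. (\<Sum>i\<le>j. raney 1 i * raney 1 (j - i)) * raney 1 (m - j))"
proof -
  have "raney 1 (Suc m) = (\<Sum>j\<le>m. raney 2 j * raney 1 (m - j))"
    using raney_1_Suc raney_convolution[where m = m and r = 2 and s = 1] by simp
  also have "\<dots> = (\<Sum>j\<le>m. (\<Sum>i\<le>j. raney 1 i * raney 1 (j - i)) * raney 1 (m - j))"
    using raney_convolution[where r = 1 and s = 1] by (simp add: numeral_2_eq_2)
  finally show ?thesis .
qed

lemma sum_greaterThanAtMost_shift: "(\<Sum>k\<in>{p<..p + Suc m}. g k) = (\<Sum>j\<le>m. g (p + Suc j))"
  by (rule sum.reindex_bij_witness[where j = "\<lambda>k. k - Suc p" and i = "\<lambda>j. p + Suc j"]) auto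

lemma sum_atLeastLessThan_shift: "(\<Sum>v\<in>{p..<p + Suc j}. g v) = (\<Sum>i\<le>j. g (p + i))"
  by (rule sum.reindex_bij_witness[where j = "\<lambda>k. k - p" and i = "\<lambda>j. p + j"]) auto

theorem card_seg_configs: "real (card (seg_configs p q)) = raney 1 (q - p)"
proof (induction "q - p" arbitrary: p q rule: less_induct)
  case less
  show ?case
  proof (cases "p < q")
    case False
    then show ?thesis by (simp add: seg_configs_trivial)
  next
    case True
    then obtain m where m: "q = p + Suc m" by (metis add_Suc_right less_imp_Suc_add)
    have IH: "real (card (seg_configs a b)) = raney 1 (b - a)" if "b - a < q - p" for a b
      using less.hyps that by blast
    have "real (card (seg_configs p q)) = (\<Sum>k\<in>{p<..q}.
        (\<Sum>v\<in>{p..<k}. real (card (seg_configs p v)) * real (card (seg_configs (Suc v) k)))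
          * real (card (seg_configs k q)))"
      using card_seg_configs_rec[OF True] card_spanning_configs_rec by simp
    also have "\<dots> = (\<Sum>j\<le>m. (\<Sum>i\<le>j. raney 1 i * raney 1 (j - i)) * raney 1 (m - j))"
      unfolding m sum_greaterThanAtMost_shift sum_atLeastLessThan_shift
      using IH m by (intro sum.cong refl arg_cong2[where f = "(*)"]) auto
    also have "\<dots> = raney 1 (q - p)" using raney_1_Suc_ternary m by simp
    finally show ?thesis .
  qed
qed

section \<open>Cutting the cycle open\<close>

definition covers :: "nat \<Rightarrow> obj \<Rightarrow> nat \<Rightarrow> bool" where
  "covers n X w \<longleftrightarrow> (\<exists>t < snd X. (fst X + t) mod n = w)"

text \<open>
  wrap n r places the segment (a, b) on the cycle as the arc of length b - a starting at vertex
  a + r (mod n); unwrap n r is its inverse on arcs, for r \<le> n.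
\<close>

definition wrap :: "nat \<Rightarrow> nat \<Rightarrow> seg \<Rightarrow> obj" where
  "wrap n r Y = ((fst Y + r) mod n, snd Y - fst Y)"

definition unwrap :: "nat \<Rightarrow> nat \<Rightarrow> obj \<Rightarrow> seg" where
  "unwrap n r X = ((fst X + n - r) mod n, (fst X + n - r) mod n + snd X)"

lemma wrap_unwrap:
  assumes "fst X < n" "r \<le> n"
  shows "wrap n r (unwrap n r X) = X"
proof -
  have "((fst X + n - r) mod n + r) mod n = (fst X + n) mod n"
    using assms(2) by (simp add: mod_add_left_eq)
  then show ?thesis using assms(1) unfolding wrap_def unwrap_def by (cases X) simp
qed

lemma unwrap_wrap:
  assumes "Y \<in> segs 0 (n - 1)" "r \<le> n"
  shows "unwrap n r (wrap n r Y) = Y"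
proof -
  obtain a b where Y: "Y = (a, b)" "a < b" "b < n" using assms(1) by (cases Y) auto
  have "((a + r) mod n + n - r) mod n = ((a + r) mod n + (n - r)) mod n" using assms(2) by simp
  also have "\<dots> = (a + r + (n - r)) mod n" by (rule mod_add_left_eq)
  also have "\<dots> = a" using Y assms(2) by simp
  finally show ?thesis using Y unfolding wrap_def unwrap_def by simp
qed

definition shift_seg :: "nat \<Rightarrow> seg \<Rightarrow> seg" where
  "shift_seg n Y = (fst Y + n, snd Y + n)"

lemma wrap_shift_seg: "wrap n r (shift_seg n Y) = wrap n r Y"
proof -
  have "(fst Y + n + r) mod n = (fst Y + r) mod n"
    by (metis add.commute add.left_commute mod_add_self2)
  then show ?thesis unfolding wrap_def shift_seg_def by simp
qed

lemma seg_rel_imp_arc_rel_wrap: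
  assumes "seg_rel (a, b) (c, d)"
  shows "arc_rel n (wrap n r (a, b)) (wrap n r (c, d))"
  using assms unfolding seg_rel_def
proof
  assume "seg_hom (a, b) (c, d)"
  then have "c \<le> a" "a < d" "d \<le> b" unfolding seg_hom_def by auto
  then have "(c + r) mod n + (d - c) - (d - a) = (c + r) mod n + (a - c)" by simp
  then have "((c + r) mod n + (d - c) - (d - a)) mod n = (c + r + (a - c)) mod n"
    by (simp only: mod_add_left_eq)
  also have "\<dots> = (a + r) mod n mod n" using \<open>c \<le> a\<close> by (simp add: add.commute)
  finally have "((c + r) mod n + (d - c) - (d - a)) mod n = (a + r) mod n mod n" .
  then show ?thesis
    using \<open>c \<le> a\<close> \<open>a < d\<close> \<open>d \<le> b\<close> unfolding arc_rel_def has_hom_def wrap_def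
    by (intro disjI1 exI[of _ "d - a"]) auto
next
  assume "seg_ext (a, b) (c, d)"
  then have "a < c" "c \<le> b" "b < d" unfolding seg_ext_def by auto
  have "((a + r) mod n + (c - a)) mod n = (a + r + (c - a)) mod n" by (rule mod_add_left_eq)
  also have "\<dots> = (c + r) mod n mod n" using \<open>a < c\<close> by (simp add: add.commute)
  finally have "((a + r) mod n + (c - a)) mod n = (c + r) mod n mod n" .
  then show ?thesis
    using \<open>a < c\<close> \<open>c \<le> b\<close> \<open>b < d\<close> unfolding arc_rel_def has_ext_def wrap_def
    by (intro disjI2 exI[of _ "c - a"]) auto
qed

lemma arc_rel_wrap_imp_seg_rel:
  assumes "(a, b) \<in> segs 0 (n - 1)" "(c, d) \<in> segs 0 (n - 1)"
    and "arc_rel n (wrap n r (a, b)) (wrap n r (c, d))"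
  shows "seg_rel (a, b) (c, d)"
  using assms(3) unfolding arc_rel_def
proof
  assume "has_hom n (wrap n r (a, b)) (wrap n r (c, d))"
  then obtain m where m: "1 \<le> m" "m \<le> b - a" "m \<le> d - c"
      "((c + r) mod n + (d - c) - m) mod n = (a + r) mod n mod n"
    unfolding has_hom_def wrap_def by auto
  have "(c + r) mod n + (d - c) - m = (c + r) mod n + (d - m - c)" using m by simp
  moreover have "((c + r) mod n + (d - m - c)) mod n = (c + r + (d - m - c)) mod n"
    by (rule mod_add_left_eq)
  moreover have "c + r + (d - m - c) = (d - m) + r" using m by simp
  ultimately have "((d - m) + r) mod n = (a + r) mod n" using m(4) by (metis mod_mod_trivial)
  then have "(d - m) mod n = a mod n" by (simp add: mod_add_right_cancel_nat)
  moreover have "d - m < n" "a < n" using assms(1,2) by auto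
  ultimately have "d - m = a" by simp
  then show ?thesis using m unfolding seg_rel_def seg_hom_def by auto
next
  assume "has_ext n (wrap n r (a, b)) (wrap n r (c, d))"
  then obtain m where m: "1 \<le> m" "m \<le> b - a" "b - a < d - c + m"
      "((a + r) mod n + m) mod n = (c + r) mod n mod n"
    unfolding has_ext_def wrap_def by auto
  moreover have "((a + r) mod n + m) mod n = (a + r + m) mod n" by (rule mod_add_left_eq)
  moreover have "a + r + m = (a + m) + r" by simp
  ultimately have "((a + m) + r) mod n = (c + r) mod n" by (metis mod_mod_trivial)
  then have "(a + m) mod n = c mod n" by (simp add: mod_add_right_cancel_nat)
  moreover have "a + m < n" "c < n" using assms(1,2) m(2) by auto
  ultimately have "a + m = c" by simp
  then show ?thesis using m unfolding seg_rel_def seg_ext_def by auto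
qed

lemma wrap_mem_rigid_indec: "Y \<in> segs 0 (n - 1) \<Longrightarrow> wrap n r Y \<in> rigid_indec n"
  by (cases Y) (auto simp: wrap_def rigid_indec_def)

lemma covers_wrap_iff:
  assumes "(a, b) \<in> segs 0 (n - 1)" "v < n"
  shows "covers n (wrap n r (a, b)) ((v + r) mod n) \<longleftrightarrow> a \<le> v \<and> v < b"
proof -
  have "((a + r) mod n + t) mod n = (v + r) mod n \<longleftrightarrow> a + t = v" if "t < b - a" for t
  proof -
    have "((a + r) mod n + t) mod n = (a + r + t) mod n" by (rule mod_add_left_eq)
    moreover have "a + r + t = (a + t) + r" by simp
    ultimately have "((a + r) mod n + t) mod n = ((a + t) + r) mod n" by metis
    then have "((a + r) mod n + t) mod n = (v + r) mod n \<longleftrightarrow> (a + t) mod n = v mod n"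
      by (simp add: mod_add_right_cancel_nat)
    also have "\<dots> \<longleftrightarrow> a + t = v" using that assms by auto
    finally show ?thesis .
  qed
  then have "covers n (wrap n r (a, b)) ((v + r) mod n) \<longleftrightarrow> (\<exists>t < b - a. a + t = v)"
    unfolding covers_def wrap_def by auto
  also have "\<dots> \<longleftrightarrow> a \<le> v \<and> v < b" by (auto intro: exI[of _ "v - a"])
  finally show ?thesis .
qed

lemma not_covers_wrap:
  assumes "Y \<in> segs 0 (n - 1)" "g < n"
  shows "\<not> covers n (wrap n (Suc g) Y) g"
proof -
  have "g = ((n - 1) + Suc g) mod n" using assms(2) by simp
  then show ?thesis using covers_wrap_iff[of "fst Y" "snd Y" n "n - 1" "Suc g"] assms
    by (cases Y) auto
qed

lemma unwrap_mem_segs: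
  assumes X: "X \<in> rigid_indec n" and "g < n" and "\<not> covers n X g"
  shows "unwrap n (Suc g) X \<in> segs 0 (n - 1)"
proof -
  obtain i l where X_eq: "X = (i, l)" "i < n" "1 \<le> l" "l < n" using X unfolding rigid_indec_def
    by auto
  define a where "a = (i + n - Suc g) mod n"
  have "a < n" unfolding a_def using \<open>g < n\<close> by simp
  have "(a + Suc g) mod n = i"
    using wrap_unwrap[of X n "Suc g"] X_eq \<open>g < n\<close> unfolding wrap_def unwrap_def a_def by simp
  have "a + l \<le> n - 1"
  proof (rule ccontr)
    \<comment> \<open>otherwise the arc reaches the vertex at position n - 1 of the cut, which is g\<close>
    assume "\<not> a + l \<le> n - 1"
    then have "n - 1 - a < l" using \<open>a < n\<close> by linarith
    have "(i + (n - 1 - a)) mod n = (a + Suc g + (n - 1 - a)) mod n"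
      using \<open>(a + Suc g) mod n = i\<close> by (metis mod_add_left_eq)
    also have "\<dots> = g" using \<open>a < n\<close> \<open>g < n\<close> by simp
    finally have "covers n X g" unfolding covers_def X_eq using \<open>n - 1 - a < l\<close> by auto
    then show False using assms(3) by simp
  qed
  moreover have "unwrap n (Suc g) X = (a, a + l)" unfolding unwrap_def a_def X_eq by simp
  ultimately show ?thesis using X_eq by simp
qed

lemma no_ranked_cover_between_copies:
  assumes fin: "finite A" and rk: "ranking seg_rel A f"
    and len: "\<forall>(a, b)\<in>A. a < b \<and> b \<le> a + L"
    and copies: "(0, L) \<in> A" "(n, n + L) \<in> A" "f (0, L) = f (n, n + L)"
    and "0 < L" "L < n" and cov: "\<forall>v. L \<le> v \<and> v < n \<longrightarrow> covered_by A v"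
  shows False
proof -
  have "\<not> crossed_by A L"
  proof
    assume "crossed_by A L"
    then obtain a b where ab: "(a, b) \<in> A" "a < L" "L < b" unfolding crossed_by_def by blast
    then show False
      using len ranked_segs_noncrossing[OF rk copies(1) ab(1)] by (cases "a = 0") auto
  qed
  moreover have "\<not> crossed_by A n"
  proof
    assume "crossed_by A n"
    then obtain a b where ab: "(a, b) \<in> A" "a < n" "n < b" unfolding crossed_by_def by blast
    moreover from this have "b < n + L" using len by auto
    ultimately show False using ranked_segs_noncrossing[OF rk ab(1) copies(2)] by simp
  qed
  moreover have "\<forall>(a, b)\<in>A. a < b" using len by auto
  ultimately obtain d c where dc: "(L, d) \<in> A" "(c, n) \<in> A" "f (L, d) \<le> f (c, n)"
    using ranked_chain_start_le_end[OF fin rk _ \<open>L < n\<close> cov] by blast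
  have "L < d" "c < n" using dc(1,2) len by auto
  then have "seg_ext (0, L) (L, d)" "seg_ext (c, n) (n, n + L)"
    using \<open>0 < L\<close> unfolding seg_ext_def by auto
  then have "f (0, L) < f (L, d)" "f (c, n) < f (n, n + L)"
    using rankingD[OF rk copies(1) dc(1)] rankingD[OF rk dc(2) copies(2)] \<open>0 < L\<close> \<open>c < n\<close>
    unfolding seg_rel_def by auto
  then show False using copies(3) dc(3) by simp
qed

lemma covered_by_unwrap:
  assumes X: "X \<in> rigid_indec n" and "r \<le> n" "v < n" "snd X \<le> v"
    and "covers n X ((v + r) mod n)"
  shows "covered_by {unwrap n r X} v"
proof -
  obtain t where t: "t < snd X" "(fst X + t) mod n = (v + r) mod n"
    using assms(5) unfolding covers_def by blast
  define c where "c = fst (unwrap n r X)"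
  have "fst X < n" using X unfolding rigid_indec_def by auto
  then have "c < n" "(c + r) mod n = fst X"
    using wrap_unwrap[of X n r] \<open>r \<le> n\<close> unfolding c_def unwrap_def wrap_def
    by (auto simp: prod_eq_iff)
  have "((c + r) mod n + t) mod n = (c + r + t) mod n" by (rule mod_add_left_eq)
  moreover have "c + r + t = (c + t) + r" by simp
  ultimately have "((c + t) + r) mod n = ((c + r) mod n + t) mod n" by metis
  then have "(c + t) mod n = v"
    using t(2) \<open>(c + r) mod n = fst X\<close> \<open>v < n\<close> by (simp add: mod_add_right_cancel_nat)
  moreover have "c + t < n"
  proof (rule ccontr)
    \<comment> \<open>otherwise v = c + t - n < t < snd X\<close>
    assume "\<not> c + t < n"
    then have "(c + t) mod n = c + t - n"
      using \<open>c < n\<close> t(1) X le_mod_geq[of n "c + t"] unfolding rigid_indec_def by auto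
    then show False using \<open>(c + t) mod n = v\<close> \<open>c < n\<close> t(1) \<open>snd X \<le> v\<close> by linarith
  qed
  ultimately have "c \<le> v" "v < c + snd X" using t(1) by auto
  then show ?thesis unfolding covered_by_def c_def unwrap_def by auto
qed

text \<open>The lifts of S to two consecutive sheets of the universal cover of the cycle:\<close>

definition double_lift :: "nat \<Rightarrow> nat \<Rightarrow> obj set \<Rightarrow> seg set" where
  "double_lift n r S = unwrap n r ` S \<union> shift_seg n ` unwrap n r ` S"

lemma ranking_double_lift:
  assumes rk: "ranking (arc_rel n) S f" and S: "S \<subseteq> rigid_indec n" and "r \<le> n"
  shows "ranking seg_rel (double_lift n r S) (f \<circ> wrap n r)"
proof (rule ranking_pullback[OF rk])
  have wrap_lift: "wrap n r (unwrap n r X) = X" "wrap n r (shift_seg n (unwrap n r X)) = X"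
    if "X \<in> S" for X
    using wrap_unwrap[of X n r] wrap_shift_seg \<open>r \<le> n\<close> that S unfolding rigid_indec_def by auto
  then show "wrap n r ` double_lift n r S \<subseteq> S" unfolding double_lift_def by auto
  fix Y Y' assume Y: "Y \<in> double_lift n r S" "Y' \<in> double_lift n r S" "Y \<noteq> Y'" "seg_rel Y Y'"
  have "wrap n r Y \<noteq> wrap n r Y'"
  proof
    \<comment> \<open>the two lifts of one arc are n apart, and arcs are shorter than n\<close>
    assume eq: "wrap n r Y = wrap n r Y'"
    obtain X X' where X: "X \<in> S" "X' \<in> S" "Y \<in> {unwrap n r X, shift_seg n (unwrap n r X)}"
        "Y' \<in> {unwrap n r X', shift_seg n (unwrap n r X')}"
      using Y(1,2) unfolding double_lift_def by blast
    then have "wrap n r Y = X" "wrap n r Y' = X'" using wrap_lift[OF X(1)] wrap_lift[OF X(2)]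
      by auto
    then have "Y = unwrap n r X \<and> Y' = shift_seg n (unwrap n r X) \<or>
        Y = shift_seg n (unwrap n r X) \<and> Y' = unwrap n r X"
      using eq X(3,4) Y(3) by auto
    moreover have "snd X < n" using X(1) S unfolding rigid_indec_def by auto
    ultimately show False
      using Y(4) unfolding unwrap_def shift_seg_def seg_rel_def seg_hom_def seg_ext_def by auto
  qed
  moreover have "arc_rel n (wrap n r Y) (wrap n r Y')"
    using seg_rel_imp_arc_rel_wrap Y(4) by (metis prod.collapse)
  ultimately show "wrap n r Y \<noteq> wrap n r Y' \<and> arc_rel n (wrap n r Y) (wrap n r Y')" ..
qed

theorem exc_arc_set_has_uncovered_vertex:
  assumes "2 \<le> n" and "exc_arc_set n S"
  shows "\<exists>g<n. \<forall>X\<in>S. \<not> covers n X g"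
proof (rule ccontr)
  assume "\<not> ?thesis"
  then have cov: "\<forall>g<n. \<exists>X\<in>S. covers n X g" by auto
  obtain f where S: "S \<subseteq> rigid_indec n" "card S = n - 1" "ranking (arc_rel n) S f"
    using assms(2) unfolding exc_arc_set_def by blast
  have "finite S" "S \<noteq> {}" using finite_subset[OF S(1)] S(2) assms(1) by auto
  define L where "L = Max (snd ` S)"
  have "L \<in> snd ` S" unfolding L_def using \<open>finite S\<close> \<open>S \<noteq> {}\<close> by simp
  then obtain X0 where X0: "X0 \<in> S" "snd X0 = L" by auto
  have arc: "fst X < n" "1 \<le> snd X" "snd X \<le> L" if "X \<in> S" for X
    using that S(1) \<open>finite S\<close> unfolding L_def rigid_indec_def by auto
  have "fst X0 < n" "0 < L" "L < n" using X0 S(1) unfolding rigid_indec_def by auto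
  define r where "r = fst X0"
  define A where "A = double_lift n r S"
  have "unwrap n r X0 = (0, L)" using X0 unfolding unwrap_def r_def by simp
  then have "(0, L) \<in> A" "(n, n + L) \<in> A" "(f \<circ> wrap n r) (0, L) = (f \<circ> wrap n r) (n, n + L)"
    using X0(1) wrap_shift_seg[of n r "(0, L)"]
    unfolding A_def double_lift_def shift_seg_def by (force simp: add.commute)+
  moreover have "finite A" unfolding A_def double_lift_def using \<open>finite S\<close> by simp
  moreover have "ranking seg_rel A (f \<circ> wrap n r)"
    unfolding A_def using ranking_double_lift[OF S(3,1)] \<open>fst X0 < n\<close> r_def by simp
  moreover have "\<forall>(a, b)\<in>A. a < b \<and> b \<le> a + L"
    using arc unfolding A_def double_lift_def unwrap_def shift_seg_def by (auto simp: Suc_le_eq)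
  moreover have "covered_by A v" if "L \<le> v" "v < n" for v
  proof -
    have "(v + r) mod n < n" using \<open>2 \<le> n\<close> by simp
    then obtain X where "X \<in> S" "covers n X ((v + r) mod n)" using cov by blast
    then have "covered_by {unwrap n r X} v"
      using covered_by_unwrap[of X n r v] S(1) arc[of X] that \<open>fst X0 < n\<close> unfolding r_def by auto
    moreover have "{unwrap n r X} \<subseteq> A" using \<open>X \<in> S\<close> unfolding A_def double_lift_def by blast
    ultimately show ?thesis by (rule covered_by_mono)
  qed
  ultimately show False
    using no_ranked_cover_between_copies[of A "f \<circ> wrap n r" L n] \<open>0 < L\<close> \<open>L < n\<close> by blast
qed

lemma exc_arc_set_wrap:
  assumes T: "T \<in> seg_configs 0 (n - 1)" and "g < n"
  shows "exc_arc_set n (wrap n (Suc g) ` T)"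
proof -
  note sub = seg_configsD(1)[OF T]
  obtain f where rk: "ranking seg_rel T f" using seg_configsD(3)[OF T] by blast
  have inv: "unwrap n (Suc g) (wrap n (Suc g) Y) = Y" if "Y \<in> T" for Y
    using unwrap_wrap[of Y n "Suc g"] that sub \<open>g < n\<close> by auto
  then have "inj_on (wrap n (Suc g)) T" by (rule inj_on_inverseI)
  then have "card (wrap n (Suc g) ` T) = n - 1" using seg_configsD(2)[OF T]
    by (simp add: card_image)
  moreover have "wrap n (Suc g) ` T \<subseteq> rigid_indec n" using sub wrap_mem_rigid_indec by blast
  moreover have "ranking (arc_rel n) (wrap n (Suc g) ` T) (f \<circ> unwrap n (Suc g))"
  proof (rule ranking_pullback[OF rk])
    show "unwrap n (Suc g) ` wrap n (Suc g) ` T \<subseteq> T" using inv by auto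
  next
    fix X X' assume "X \<in> wrap n (Suc g) ` T" "X' \<in> wrap n (Suc g) ` T" "X \<noteq> X'" "arc_rel n X X'"
    then obtain Y Y' where Y: "Y \<in> T" "Y' \<in> T" "X = wrap n (Suc g) Y" "X' = wrap n (Suc g) Y'"
      by blast
    moreover obtain a b c d where "Y = (a, b)" "Y' = (c, d)" by fastforce
    moreover have "Y \<in> segs 0 (n - 1)" "Y' \<in> segs 0 (n - 1)" using sub Y(1,2) by blast+
    ultimately show "unwrap n (Suc g) X \<noteq> unwrap n (Suc g) X' \<and>
        seg_rel (unwrap n (Suc g) X) (unwrap n (Suc g) X')"
      using \<open>X \<noteq> X'\<close> \<open>arc_rel n X X'\<close> inv arc_rel_wrap_imp_seg_rel by auto
  qed
  ultimately show ?thesis unfolding exc_arc_set_def by blast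
qed

lemma seg_config_unwrap:
  assumes S: "exc_arc_set n S" and "g < n" and uncov: "\<forall>X\<in>S. \<not> covers n X g"
  shows "unwrap n (Suc g) ` S \<in> seg_configs 0 (n - 1)"
proof -
  obtain f where S': "S \<subseteq> rigid_indec n" "card S = n - 1" "ranking (arc_rel n) S f"
    using S unfolding exc_arc_set_def by blast
  have inv: "wrap n (Suc g) (unwrap n (Suc g) X) = X" if "X \<in> S" for X
    using wrap_unwrap[of X n "Suc g"] that S'(1) \<open>g < n\<close> unfolding rigid_indec_def by auto
  then have "inj_on (unwrap n (Suc g)) S" by (rule inj_on_inverseI)
  then have "card (unwrap n (Suc g) ` S) = n - 1 - 0" using S'(2) by (simp add: card_image)
  moreover have "unwrap n (Suc g) ` S \<subseteq> segs 0 (n - 1)"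
    using unwrap_mem_segs S'(1) \<open>g < n\<close> uncov by blast
  moreover have "ranking seg_rel (unwrap n (Suc g) ` S) (f \<circ> wrap n (Suc g))"
  proof (rule ranking_pullback[OF S'(3)])
    show "wrap n (Suc g) ` unwrap n (Suc g) ` S \<subseteq> S" using inv by auto
  next
    fix Y Y' assume "Y \<in> unwrap n (Suc g) ` S" "Y' \<in> unwrap n (Suc g) ` S" "Y \<noteq> Y'" "seg_rel Y Y'"
    then have "wrap n (Suc g) Y \<noteq> wrap n (Suc g) Y'" using inv by auto
    moreover obtain a b c d where "Y = (a, b)" "Y' = (c, d)" by fastforce
    ultimately show "wrap n (Suc g) Y \<noteq> wrap n (Suc g) Y' \<and>
        arc_rel n (wrap n (Suc g) Y) (wrap n (Suc g) Y')"
      using seg_rel_imp_arc_rel_wrap \<open>seg_rel Y Y'\<close> by simp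
  qed
  ultimately show ?thesis unfolding seg_configs_def by blast
qed

lemma uncovered_vertex_unique:
  assumes T: "T \<in> seg_configs 0 (n - 1)" and "g < n" "g' < n"
    and uncov: "\<forall>X\<in>wrap n (Suc g) ` T. \<not> covers n X g'"
  shows "g' = g"
proof (rule ccontr)
  assume "g' \<noteq> g"
  \<comment> \<open>g' sits at position v of the cycle cut open after g\<close>
  define v where "v = fst (unwrap n (Suc g) (g', 1))"
  have "v < n" unfolding v_def unwrap_def using \<open>g < n\<close> by simp
  have "(v + Suc g) mod n = g'"
    using wrap_unwrap[of "(g', 1)" n "Suc g"] \<open>g < n\<close> \<open>g' < n\<close> unfolding v_def wrap_def by auto
  moreover have "(n - 1 + Suc g) mod n = g" using \<open>g < n\<close> by simp
  ultimately have "v < n - 1" using \<open>v < n\<close> \<open>g' \<noteq> g\<close> by (cases "v = n - 1") auto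
  then obtain a b where "(a, b) \<in> T" "a \<le> v" "v < b"
    using seg_config_covered[OF T, of v] unfolding covered_by_def by auto
  moreover from this have "(a, b) \<in> segs 0 (n - 1)" using seg_configsD(1)[OF T] by blast
  ultimately have "covers n (wrap n (Suc g) (a, b)) g'"
    using covers_wrap_iff[of a b n v "Suc g"] \<open>v < n\<close> \<open>(v + Suc g) mod n = g'\<close> by simp
  then show False using uncov \<open>(a, b) \<in> T\<close> by blast
qed

theorem card_exc_arc_sets:
  assumes "2 \<le> n"
  shows "card {S. exc_arc_set n S} = n * card (seg_configs 0 (n - 1))"
proof -
  define wrap_at :: "nat \<times> seg set \<Rightarrow> obj set" where "wrap_at = (\<lambda>(g, T). wrap n (Suc g) ` T)"
  have "{S. exc_arc_set n S} = wrap_at ` ({..<n} \<times> seg_configs 0 (n - 1))"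
  proof (intro equalityI subsetI)
    fix S assume "S \<in> {S. exc_arc_set n S}"
    then have S: "exc_arc_set n S" by simp
    obtain g where g: "g < n" "\<forall>X\<in>S. \<not> covers n X g"
      using exc_arc_set_has_uncovered_vertex[OF assms S] by blast
    have "wrap n (Suc g) (unwrap n (Suc g) X) = X" if "X \<in> S" for X
      using wrap_unwrap[of X n "Suc g"] that S g(1) unfolding exc_arc_set_def rigid_indec_def
      by auto
    then have "S = wrap_at (g, unwrap n (Suc g) ` S)" unfolding wrap_at_def
      by (simp add: image_image)
    then show "S \<in> wrap_at ` ({..<n} \<times> seg_configs 0 (n - 1))"
      using seg_config_unwrap[OF S g] g(1) by blast
  qed (auto simp: wrap_at_def exc_arc_set_wrap)
  moreover have "inj_on wrap_at ({..<n} \<times> seg_configs 0 (n - 1))"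
  proof (rule inj_onI, clarify)
    fix g T g' T'
    assume "g < n" "T \<in> seg_configs 0 (n - 1)" "g' < n" "T' \<in> seg_configs 0 (n - 1)"
      and eq: "wrap_at (g, T) = wrap_at (g', T')"
    then have "\<forall>X\<in>wrap n (Suc g) ` T. \<not> covers n X g'"
      using not_covers_wrap seg_configsD(1)[OF \<open>T' \<in> seg_configs 0 (n - 1)\<close>] unfolding wrap_at_def
      by auto
    then have "g' = g"
      using uncovered_vertex_unique[OF \<open>T \<in> seg_configs 0 (n - 1)\<close> \<open>g < n\<close> \<open>g' < n\<close>] by blast
    moreover have "unwrap n (Suc g) ` wrap n (Suc g) ` U = U" if "U \<in> seg_configs 0 (n - 1)" for U
    proof -
      have "unwrap n (Suc g) (wrap n (Suc g) Y) = Y" if "Y \<in> U" for Y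
        using unwrap_wrap[of Y n "Suc g"] seg_configsD(1)[OF \<open>U \<in> seg_configs 0 (n - 1)\<close>]
          that \<open>g < n\<close>
        by auto
      then show ?thesis by (simp add: image_image)
    qed
    moreover from \<open>g' = g\<close> eq have "wrap n (Suc g) ` T = wrap n (Suc g) ` T'"
      unfolding wrap_at_def by simp
    ultimately show "g = g' \<and> T = T'"
      using \<open>T \<in> seg_configs 0 (n - 1)\<close> \<open>T' \<in> seg_configs 0 (n - 1)\<close> by metis
  qed
  ultimately show ?thesis by (simp add: card_image card_cartesian_product)
qed

theorem corollary3p12:
  fixes n :: nat
  assumes "n \<ge> 2"
  shows "real (card {S. exc_set TYPE('k::field) n S}) =
           real n * fact (3 * n - 3) / (fact (n - 1) * fact (2 * n - 1))"
proof -
  have "{S. exc_set TYPE('k) n S} = {S. exc_arc_set n S}"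
    using exc_set_iff_exc_arc_set by blast
  then have "real (card {S. exc_set TYPE('k) n S}) = real n * real (card (seg_configs 0 (n - 1)))"
    using card_exc_arc_sets[OF assms] by simp
  also have "\<dots> = real n * raney 1 (n - 1)"
    using card_seg_configs[of 0 "n - 1"] by simp
  also have "raney 1 (n - 1) = fact (3 * n - 3) / (fact (n - 1) * fact (2 * n - 1))"
  proof -
    have "3 * (n - 1) + 0 = 3 * n - 3" "2 * (n - 1) + Suc 0 = 2 * n - 1" using assms by simp_all
    then show ?thesis unfolding One_nat_def raney.simps by simp
  qed
  finally show ?thesis by simp
qed

end
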